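(* Let $\mathcal C$ be a small triangulated category with a tensor product that is exact in each variable and has a tensor identity $e$. Suppose either that the tensor product is commutative, or that there is an object $c\in\mathcal C$ such that no proper thick subcategory of $\mathcal C$ contains $c$. Then the set of thick tensor ideals of $\mathcal C$, ordered by inclusion and with product $(\mathcal D_1,\mathcal D_2)\mapsto\langle\mathcal D_1\mathcal D_2\rangle$, is an ideal lattice, and a thick tensor ideal is compact in this lattice if and only if it is of the form $\langle x\rangle$ for a single object $x$.
   Context: A tensor product on an additive category is an additive bifunctor $\otimes$ with a natural associativity isomorphism; a tensor identity $e$ has natural isomorphisms $x\otimes e\cong x\cong e\otimes x$ satisfying the pentagon and triangle axioms. A full subcategory $\mathcal D$ of a triangulated category is thick if it is a triangulated subcategory closed under direct summands. A tensor ideal is a full additive subcategory $\mathcal D$ with $x\otimes y\in\mathcal D$ whenever $x\in\mathcal D$ or $y\in\mathcal D$. $\langle\mathcal D_0\rangle$ is the smallest thick tensor ideal containing $\mathcal D_0$; $\mathcal D_1\mathcal D_2$ is the class of finite coproducts of objects $x\otimes y$, $x\in\mathcal D_1$, $y\in\mathcal D_2$. An ideal lattice is a poset $(L,\leq)$ with an associative multiplication such that: (L1) $L$ is a complete lattice; (L2) every element is a supremum of compact elements ($a$ is compact if $a\leq\sup A$ implies $a\leq\sup A'$ for some finite $A'\subseteq A$); (L3) multiplication distributes over binary joins on both sides; (L4) $1=\sup L$ is compact and is a two-sided identity; (L5) products of compact elements are compact. *)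

theory Defs
  imports Main
begin

section \<open>Data of a (small) tensor triangulated category\<close>

text \<open>Smallness is automatic: objects and
  morphisms form sets. comp g f is the composite g after f (defined when cod f = dom g).
  hzero x y is the zero morphism x to y, hadd/hneg the abelian group structure on hom sets.
  shift/shiftm is the suspension functor, tri the class of distinguished triangles
  (f,g,h) with f: x to y, g: y to z, h: z to shift x.  tens/tensm is the tensor product
  on objects/morphisms, assoc its associativity isomorphism, unit the tensor identity,
  lunit/runit the unit isomorphisms e tens x to x and x tens e to x.\<close>

record ('o, 'm) ttcat =
  Ob :: "'o set"
  Ar :: "'m set"
  dom :: "'m \<Rightarrow> 'o"
  cod :: "'m \<Rightarrow> 'o"
  comp :: "'m \<Rightarrow> 'm \<Rightarrow> 'm"
  idm :: "'o \<Rightarrow> 'm"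
  hadd :: "'m \<Rightarrow> 'm \<Rightarrow> 'm"
  hneg :: "'m \<Rightarrow> 'm"
  hzero :: "'o \<Rightarrow> 'o \<Rightarrow> 'm"
  shift :: "'o \<Rightarrow> 'o"
  shiftm :: "'m \<Rightarrow> 'm"
  tri :: "('m \<times> 'm \<times> 'm) set"
  tens :: "'o \<Rightarrow> 'o \<Rightarrow> 'o"
  tensm :: "'m \<Rightarrow> 'm \<Rightarrow> 'm"
  assoc :: "'o \<Rightarrow> 'o \<Rightarrow> 'o \<Rightarrow> 'm"
  unit :: "'o"
  lunit :: "'o \<Rightarrow> 'm"
  runit :: "'o \<Rightarrow> 'm"

definition hom :: "('o,'m,'z) ttcat_scheme \<Rightarrow> 'o \<Rightarrow> 'o \<Rightarrow> 'm set" where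
  "hom C x y = {f \<in> Ar C. dom C f = x \<and> cod C f = y}"

definition category :: "('o,'m,'z) ttcat_scheme \<Rightarrow> bool" where
  "category C \<longleftrightarrow>
     (\<forall>f\<in>Ar C. dom C f \<in> Ob C \<and> cod C f \<in> Ob C) \<and>
     (\<forall>x\<in>Ob C. idm C x \<in> hom C x x) \<and>
     (\<forall>x y z f g. f \<in> hom C x y \<longrightarrow> g \<in> hom C y z \<longrightarrow> comp C g f \<in> hom C x z) \<and>
     (\<forall>x y f. f \<in> hom C x y \<longrightarrow> comp C (idm C y) f = f \<and> comp C f (idm C x) = f) \<and>
     (\<forall>w x y z f g h. f \<in> hom C w x \<longrightarrow> g \<in> hom C x y \<longrightarrow> h \<in> hom C y z \<longrightarrow>
        comp C h (comp C g f) = comp C (comp C h g) f)"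

definition preadditive :: "('o,'m,'z) ttcat_scheme \<Rightarrow> bool" where
  "preadditive C \<longleftrightarrow> category C \<and>
     (\<forall>x\<in>Ob C. \<forall>y\<in>Ob C. hzero C x y \<in> hom C x y) \<and>
     (\<forall>x y f g. f \<in> hom C x y \<longrightarrow> g \<in> hom C x y \<longrightarrow>
        hadd C f g \<in> hom C x y \<and> hneg C f \<in> hom C x y \<and>
        hadd C f g = hadd C g f \<and> hadd C f (hzero C x y) = f \<and>
        hadd C f (hneg C f) = hzero C x y) \<and>
     (\<forall>x y f g h. f \<in> hom C x y \<longrightarrow> g \<in> hom C x y \<longrightarrow> h \<in> hom C x y \<longrightarrow>
        hadd C (hadd C f g) h = hadd C f (hadd C g h)) \<and>
     (\<forall>x y z f g h. f \<in> hom C x y \<longrightarrow> g \<in> hom C x y \<longrightarrow> h \<in> hom C y z \<longrightarrow>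
        comp C h (hadd C f g) = hadd C (comp C h f) (comp C h g)) \<and>
     (\<forall>w x y f g h. h \<in> hom C w x \<longrightarrow> f \<in> hom C x y \<longrightarrow> g \<in> hom C x y \<longrightarrow>
        comp C (hadd C f g) h = hadd C (comp C f h) (comp C g h))"

definition iso :: "('o,'m,'z) ttcat_scheme \<Rightarrow> 'm \<Rightarrow> 'o \<Rightarrow> 'o \<Rightarrow> bool" where
  "iso C f x y \<longleftrightarrow> f \<in> hom C x y \<and>
     (\<exists>g\<in>hom C y x. comp C g f = idm C x \<and> comp C f g = idm C y)"

definition zero_obj :: "('o,'m,'z) ttcat_scheme \<Rightarrow> 'o \<Rightarrow> bool" where
  "zero_obj C z \<longleftrightarrow> z \<in> Ob C \<and>
     (\<forall>x\<in>Ob C. hom C z x = {hzero C z x} \<and> hom C x z = {hzero C x z})"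

definition biprod :: "('o,'m,'z) ttcat_scheme \<Rightarrow> 'o \<Rightarrow> 'o \<Rightarrow> 'o \<Rightarrow> 'm \<Rightarrow> 'm \<Rightarrow> 'm \<Rightarrow> 'm \<Rightarrow> bool" where
  "biprod C x y s i1 i2 p1 p2 \<longleftrightarrow>
     x \<in> Ob C \<and> y \<in> Ob C \<and> s \<in> Ob C \<and>
     i1 \<in> hom C x s \<and> i2 \<in> hom C y s \<and> p1 \<in> hom C s x \<and> p2 \<in> hom C s y \<and>
     comp C p1 i1 = idm C x \<and> comp C p2 i2 = idm C y \<and>
     comp C p1 i2 = hzero C y x \<and> comp C p2 i1 = hzero C x y \<and>
     hadd C (comp C i1 p1) (comp C i2 p2) = idm C s"

definition additive :: "('o,'m,'z) ttcat_scheme \<Rightarrow> bool" where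
  "additive C \<longleftrightarrow> preadditive C \<and> (\<exists>z. zero_obj C z) \<and>
     (\<forall>x\<in>Ob C. \<forall>y\<in>Ob C. \<exists>s i1 i2 p1 p2. biprod C x y s i1 i2 p1 p2)"

definition endofunctor :: "('o,'m,'z) ttcat_scheme \<Rightarrow> ('o \<Rightarrow> 'o) \<Rightarrow> ('m \<Rightarrow> 'm) \<Rightarrow> bool" where
  "endofunctor C F Fm \<longleftrightarrow>
     (\<forall>x\<in>Ob C. F x \<in> Ob C \<and> Fm (idm C x) = idm C (F x)) \<and>
     (\<forall>x y f. f \<in> hom C x y \<longrightarrow> Fm f \<in> hom C (F x) (F y)) \<and>
     (\<forall>x y z f g. f \<in> hom C x y \<longrightarrow> g \<in> hom C y z \<longrightarrow> Fm (comp C g f) = comp C (Fm g) (Fm f))"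

definition additive_functor :: "('o,'m,'z) ttcat_scheme \<Rightarrow> ('o \<Rightarrow> 'o) \<Rightarrow> ('m \<Rightarrow> 'm) \<Rightarrow> bool" where
  "additive_functor C F Fm \<longleftrightarrow> endofunctor C F Fm \<and>
     (\<forall>x y f g. f \<in> hom C x y \<longrightarrow> g \<in> hom C x y \<longrightarrow> Fm (hadd C f g) = hadd C (Fm f) (Fm g))"

definition nat_iso :: "('o,'m,'z) ttcat_scheme \<Rightarrow> ('o \<Rightarrow> 'o) \<Rightarrow> ('m \<Rightarrow> 'm) \<Rightarrow>
    ('o \<Rightarrow> 'o) \<Rightarrow> ('m \<Rightarrow> 'm) \<Rightarrow> ('o \<Rightarrow> 'm) \<Rightarrow> bool" where
  "nat_iso C F Fm G Gm \<eta> \<longleftrightarrow>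
     (\<forall>x\<in>Ob C. iso C (\<eta> x) (F x) (G x)) \<and>
     (\<forall>x y f. f \<in> hom C x y \<longrightarrow> comp C (Gm f) (\<eta> x) = comp C (\<eta> y) (Fm f))"

definition autoequivalence :: "('o,'m,'z) ttcat_scheme \<Rightarrow> ('o \<Rightarrow> 'o) \<Rightarrow> ('m \<Rightarrow> 'm) \<Rightarrow> bool" where
  "autoequivalence C F Fm \<longleftrightarrow> additive_functor C F Fm \<and>
     (\<forall>x\<in>Ob C. \<forall>y\<in>Ob C. inj_on Fm (hom C x y) \<and> hom C (F x) (F y) \<subseteq> Fm ` hom C x y) \<and>
     (\<forall>y\<in>Ob C. \<exists>x\<in>Ob C. \<exists>f. iso C f (F x) y)"

definition triangle :: "('o,'m,'z) ttcat_scheme \<Rightarrow> 'm \<times> 'm \<times> 'm \<Rightarrow> bool" where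
  "triangle C t = (case t of (f, g, h) \<Rightarrow>
     f \<in> Ar C \<and> g \<in> Ar C \<and> h \<in> Ar C \<and> cod C f = dom C g \<and> cod C g = dom C h \<and>
     cod C h = shift C (dom C f))"

definition tri_mor :: "('o,'m,'z) ttcat_scheme \<Rightarrow> 'm \<times> 'm \<times> 'm \<Rightarrow> 'm \<times> 'm \<times> 'm \<Rightarrow> 'm \<times> 'm \<times> 'm \<Rightarrow> bool" where
  "tri_mor C t t' m = (case t of (f, g, h) \<Rightarrow> case t' of (f', g', h') \<Rightarrow> case m of (u, v, w) \<Rightarrow>
     u \<in> hom C (dom C f) (dom C f') \<and> v \<in> hom C (dom C g) (dom C g') \<and>
     w \<in> hom C (dom C h) (dom C h') \<and>
     comp C v f = comp C f' u \<and> comp C w g = comp C g' v \<and>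
     comp C (shiftm C u) h = comp C h' w)"

definition triangulated :: "('o,'m,'z) ttcat_scheme \<Rightarrow> bool" where
  "triangulated C \<longleftrightarrow> additive C \<and> autoequivalence C (shift C) (shiftm C) \<and>
     (\<forall>t\<in>tri C. triangle C t) \<and>
     \<comment> \<open>TR1: closure under isomorphism of triangles\<close>
     (\<forall>t t' u v w. t \<in> tri C \<longrightarrow> triangle C t' \<longrightarrow> tri_mor C t t' (u, v, w) \<longrightarrow>
        iso C u (dom C u) (cod C u) \<longrightarrow> iso C v (dom C v) (cod C v) \<longrightarrow>
        iso C w (dom C w) (cod C w) \<longrightarrow> t' \<in> tri C) \<and>
     \<comment> \<open>TR1: x \<rightarrow> x \<rightarrow> 0 \<rightarrow> \<Sigma>x is distinguished\<close>
     (\<forall>x\<in>Ob C. \<forall>z. zero_obj C z \<longrightarrow> (idm C x, hzero C x z, hzero C z (shift C x)) \<in> tri C) \<and>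
     \<comment> \<open>TR1: every morphism is the base of a distinguished triangle\<close>
     (\<forall>f\<in>Ar C. \<exists>g h. (f, g, h) \<in> tri C) \<and>
     \<comment> \<open>TR2: rotation\<close>
     (\<forall>f g h. triangle C (f, g, h) \<longrightarrow>
        ((f, g, h) \<in> tri C \<longleftrightarrow> (g, h, hneg C (shiftm C f)) \<in> tri C)) \<and>
     \<comment> \<open>TR3: completion of morphisms of triangles\<close>
     (\<forall>f g h f' g' h' u v. (f, g, h) \<in> tri C \<longrightarrow> (f', g', h') \<in> tri C \<longrightarrow>
        u \<in> hom C (dom C f) (dom C f') \<longrightarrow> v \<in> hom C (cod C f) (cod C f') \<longrightarrow>
        comp C v f = comp C f' u \<longrightarrow> (\<exists>w. tri_mor C (f, g, h) (f', g', h') (u, v, w))) \<and>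
     \<comment> \<open>TR4: octahedral axiom\<close>
     (\<forall>u v j k l i m n. (u, j, k) \<in> tri C \<longrightarrow> (v, l, i) \<in> tri C \<longrightarrow>
        (comp C v u, m, n) \<in> tri C \<longrightarrow> cod C u = dom C v \<longrightarrow>
        (\<exists>f g. f \<in> hom C (cod C j) (cod C m) \<and> g \<in> hom C (cod C m) (cod C l) \<and>
           (f, g, comp C (shiftm C j) i) \<in> tri C \<and>
           comp C f j = comp C m v \<and> comp C n f = k \<and>
           comp C g m = l \<and> comp C i g = comp C (shiftm C u) n))"

definition exact_functor :: "('o,'m,'z) ttcat_scheme \<Rightarrow> ('o \<Rightarrow> 'o) \<Rightarrow> ('m \<Rightarrow> 'm) \<Rightarrow> bool" where
  "exact_functor C F Fm \<longleftrightarrow> additive_functor C F Fm \<and>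
     (\<exists>\<phi>. nat_iso C (F \<circ> shift C) (Fm \<circ> shiftm C) (shift C \<circ> F) (shiftm C \<circ> Fm) \<phi> \<and>
        (\<forall>f g h. (f, g, h) \<in> tri C \<longrightarrow>
           (Fm f, Fm g, comp C (\<phi> (dom C f)) (Fm h)) \<in> tri C))"

definition tensor_with_identity :: "('o,'m,'z) ttcat_scheme \<Rightarrow> bool" where
  "tensor_with_identity C \<longleftrightarrow>
     \<comment> \<open>bifunctor\<close>
     (\<forall>x\<in>Ob C. \<forall>y\<in>Ob C. tens C x y \<in> Ob C \<and> tensm C (idm C x) (idm C y) = idm C (tens C x y)) \<and>
     (\<forall>x y x' y' f g. f \<in> hom C x y \<longrightarrow> g \<in> hom C x' y' \<longrightarrow>
        tensm C f g \<in> hom C (tens C x x') (tens C y y')) \<and>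
     (\<forall>x y z x' y' z' f g f' g'. f \<in> hom C x y \<longrightarrow> g \<in> hom C y z \<longrightarrow>
        f' \<in> hom C x' y' \<longrightarrow> g' \<in> hom C y' z' \<longrightarrow>
        tensm C (comp C g f) (comp C g' f') = comp C (tensm C g g') (tensm C f f')) \<and>
     \<comment> \<open>additive in each variable\<close>
     (\<forall>x y f f' g. f \<in> hom C x y \<longrightarrow> f' \<in> hom C x y \<longrightarrow> g \<in> Ar C \<longrightarrow>
        tensm C (hadd C f f') g = hadd C (tensm C f g) (tensm C f' g) \<and>
        tensm C g (hadd C f f') = hadd C (tensm C g f) (tensm C g f')) \<and>
     \<comment> \<open>natural associativity isomorphism\<close>
     (\<forall>x\<in>Ob C. \<forall>y\<in>Ob C. \<forall>z\<in>Ob C.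
        iso C (assoc C x y z) (tens C (tens C x y) z) (tens C x (tens C y z))) \<and>
     (\<forall>x y z x' y' z' f g h. f \<in> hom C x x' \<longrightarrow> g \<in> hom C y y' \<longrightarrow> h \<in> hom C z z' \<longrightarrow>
        comp C (assoc C x' y' z') (tensm C (tensm C f g) h) =
        comp C (tensm C f (tensm C g h)) (assoc C x y z)) \<and>
     \<comment> \<open>tensor identity with natural unit isomorphisms\<close>
     unit C \<in> Ob C \<and>
     nat_iso C (tens C (unit C)) (tensm C (idm C (unit C))) id id (lunit C) \<and>
     nat_iso C (\<lambda>x. tens C x (unit C)) (\<lambda>f. tensm C f (idm C (unit C))) id id (runit C) \<and>
     \<comment> \<open>pentagon axiom\<close>
     (\<forall>w\<in>Ob C. \<forall>x\<in>Ob C. \<forall>y\<in>Ob C. \<forall>z\<in>Ob C.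
        comp C (tensm C (idm C w) (assoc C x y z))
          (comp C (assoc C w (tens C x y) z) (tensm C (assoc C w x y) (idm C z))) =
        comp C (assoc C w x (tens C y z)) (assoc C (tens C w x) y z)) \<and>
     \<comment> \<open>triangle axiom\<close>
     (\<forall>x\<in>Ob C. \<forall>y\<in>Ob C.
        comp C (tensm C (idm C x) (lunit C y)) (assoc C x (unit C) y) =
        tensm C (runit C x) (idm C y))"

definition tensor_triangulated :: "('o,'m,'z) ttcat_scheme \<Rightarrow> bool" where
  "tensor_triangulated C \<longleftrightarrow> triangulated C \<and> tensor_with_identity C \<and>
     \<comment> \<open>exact in each variable\<close>
     (\<forall>x\<in>Ob C. exact_functor C (tens C x) (tensm C (idm C x)) \<and>
                exact_functor C (\<lambda>y. tens C y x) (\<lambda>f. tensm C f (idm C x)))"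

definition tensor_commutative :: "('o,'m,'z) ttcat_scheme \<Rightarrow> bool" where
  "tensor_commutative C \<longleftrightarrow> (\<exists>\<gamma>.
     (\<forall>x\<in>Ob C. \<forall>y\<in>Ob C. iso C (\<gamma> x y) (tens C x y) (tens C y x)) \<and>
     (\<forall>x y x' y' f g. f \<in> hom C x x' \<longrightarrow> g \<in> hom C y y' \<longrightarrow>
        comp C (\<gamma> x' y') (tensm C f g) = comp C (tensm C g f) (\<gamma> x y)))"

definition thick :: "('o,'m,'z) ttcat_scheme \<Rightarrow> 'o set \<Rightarrow> bool" where
  "thick C D \<longleftrightarrow> D \<subseteq> Ob C \<and> (\<exists>z\<in>D. zero_obj C z) \<and>
     (\<forall>x\<in>Ob C. x \<in> D \<longleftrightarrow> shift C x \<in> D) \<and>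
     (\<forall>f g h. (f, g, h) \<in> tri C \<longrightarrow>
        ((dom C f \<in> D \<and> dom C g \<in> D \<longrightarrow> dom C h \<in> D) \<and>
         (dom C g \<in> D \<and> dom C h \<in> D \<longrightarrow> dom C f \<in> D) \<and>
         (dom C h \<in> D \<and> dom C f \<in> D \<longrightarrow> dom C g \<in> D))) \<and>
     (\<forall>x y s i1 i2 p1 p2. biprod C x y s i1 i2 p1 p2 \<longrightarrow> s \<in> D \<longrightarrow> x \<in> D)"

definition tensor_ideal :: "('o,'m,'z) ttcat_scheme \<Rightarrow> 'o set \<Rightarrow> bool" where
  "tensor_ideal C D \<longleftrightarrow> D \<subseteq> Ob C \<and> (\<exists>z\<in>D. zero_obj C z) \<and>
     (\<forall>x y s i1 i2 p1 p2. biprod C x y s i1 i2 p1 p2 \<longrightarrow> x \<in> D \<longrightarrow> y \<in> D \<longrightarrow> s \<in> D) \<and>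
     (\<forall>x\<in>Ob C. \<forall>y\<in>Ob C. x \<in> D \<or> y \<in> D \<longrightarrow> tens C x y \<in> D)"

definition thick_tensor_ideal :: "('o,'m,'z) ttcat_scheme \<Rightarrow> 'o set \<Rightarrow> bool" where
  "thick_tensor_ideal C D \<longleftrightarrow> thick C D \<and> tensor_ideal C D"

definition gen :: "('o,'m,'z) ttcat_scheme \<Rightarrow> 'o set \<Rightarrow> 'o set" where
  "gen C D0 = \<Inter>{D. thick_tensor_ideal C D \<and> D0 \<subseteq> D}"

inductive_set fin_coprods :: "('o,'m,'z) ttcat_scheme \<Rightarrow> 'o set \<Rightarrow> 'o set"
  for C :: "('o,'m,'z) ttcat_scheme" and S :: "'o set" where
  empty: "zero_obj C z \<Longrightarrow> z \<in> fin_coprods C S"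
| step: "a \<in> fin_coprods C S \<Longrightarrow> b \<in> S \<Longrightarrow> biprod C a b s i1 i2 p1 p2 \<Longrightarrow> s \<in> fin_coprods C S"

definition prod_cls :: "('o,'m,'z) ttcat_scheme \<Rightarrow> 'o set \<Rightarrow> 'o set \<Rightarrow> 'o set" where
  "prod_cls C D1 D2 = fin_coprods C {tens C x y | x y. x \<in> D1 \<and> y \<in> D2}"

section \<open>Ideal lattices\<close>

definition is_sup :: "'a set \<Rightarrow> ('a \<Rightarrow> 'a \<Rightarrow> bool) \<Rightarrow> 'a set \<Rightarrow> 'a \<Rightarrow> bool" where
  "is_sup L le A s \<longleftrightarrow> s \<in> L \<and> (\<forall>a\<in>A. le a s) \<and> (\<forall>u\<in>L. (\<forall>a\<in>A. le a u) \<longrightarrow> le s u)"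

definition compact_el :: "'a set \<Rightarrow> ('a \<Rightarrow> 'a \<Rightarrow> bool) \<Rightarrow> 'a \<Rightarrow> bool" where
  "compact_el L le a \<longleftrightarrow> a \<in> L \<and>
     (\<forall>A s. A \<subseteq> L \<longrightarrow> is_sup L le A s \<longrightarrow> le a s \<longrightarrow>
        (\<exists>A' s'. A' \<subseteq> A \<and> finite A' \<and> is_sup L le A' s' \<and> le a s'))"

definition ideal_lattice :: "'a set \<Rightarrow> ('a \<Rightarrow> 'a \<Rightarrow> bool) \<Rightarrow> ('a \<Rightarrow> 'a \<Rightarrow> 'a) \<Rightarrow> bool" where
  "ideal_lattice L le mul \<longleftrightarrow>
     \<comment> \<open>partial order\<close>
     (\<forall>a\<in>L. le a a) \<and>
     (\<forall>a\<in>L. \<forall>b\<in>L. le a b \<and> le b a \<longrightarrow> a = b) \<and>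
     (\<forall>a\<in>L. \<forall>b\<in>L. \<forall>c\<in>L. le a b \<and> le b c \<longrightarrow> le a c) \<and>
     \<comment> \<open>associative multiplication\<close>
     (\<forall>a\<in>L. \<forall>b\<in>L. mul a b \<in> L) \<and>
     (\<forall>a\<in>L. \<forall>b\<in>L. \<forall>c\<in>L. mul (mul a b) c = mul a (mul b c)) \<and>
     \<comment> \<open>(L1) complete lattice\<close>
     (\<forall>A. A \<subseteq> L \<longrightarrow> (\<exists>s. is_sup L le A s)) \<and>
     \<comment> \<open>(L2) every element is a supremum of compact elements\<close>
     (\<forall>a\<in>L. \<exists>A. A \<subseteq> {c. compact_el L le c} \<and> is_sup L le A a) \<and>
     \<comment> \<open>(L3) distributivity over binary joins\<close>
     (\<forall>a\<in>L. \<forall>b\<in>L. \<forall>c\<in>L. \<forall>s. is_sup L le {b, c} s \<longrightarrow>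
        is_sup L le {mul a b, mul a c} (mul a s) \<and> is_sup L le {mul b a, mul c a} (mul s a)) \<and>
     \<comment> \<open>(L4) the top element is compact and a two-sided identity\<close>
     (\<exists>t. is_sup L le L t \<and> compact_el L le t \<and> (\<forall>a\<in>L. mul t a = a \<and> mul a t = a)) \<and>
     \<comment> \<open>(L5) products of compact elements are compact\<close>
     (\<forall>a b. compact_el L le a \<longrightarrow> compact_el L le b \<longrightarrow> compact_el L le (mul a b))"

end

theory Submission
  imports Defs
begin

text \<open>Thick tensor ideals are closed under intersections and under directed unions, so the
  ideal generated by \<open>X\<close> is the union of the ideals generated by finite subsets of \<open>X\<close>. The
  lattice is therefore complete and algebraic, and its compact elements are the finitely
  generated ideals; these are principal, generated by a biproduct of the generators.

  Preimages of thick tensor ideals under the exact functors \<open>a \<otimes> -\<close> and \<open>- \<otimes> b\<close> are thick.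
  Using this one factor at a time shows that \<open>\<langle>X\<rangle>\<langle>Y\<rangle>\<close> is generated by the objects
  \<open>x \<otimes> u \<otimes> y\<close> with \<open>x \<in> X\<close>, \<open>y \<in> Y\<close>; associativity, distributivity and the unit
  laws of the product follow, up to the coherence isomorphisms. For principal ideals all
  \<open>x \<otimes> u \<otimes> y\<close> lie in \<open>\<langle>x \<otimes> c \<otimes> y\<rangle>\<close> for a single \<open>c\<close>: if the tensor product is
  commutative one may take \<open>c = e\<close>, and otherwise the thick generator \<open>c\<close>, since \<open>{u. x \<otimes> u \<otimes> y \<in> \<langle>x \<otimes> c \<otimes> y\<rangle>}\<close>
  is thick. Hence products of compact ideals are compact.\<close>

locale tensor_triangulated_category =
  fixes C :: "('o, 'm, 'z) ttcat_scheme"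
  assumes tensor_triangulated: "tensor_triangulated C"
begin

abbreviation tensor :: "'o \<Rightarrow> 'o \<Rightarrow> 'o" (infixl "\<otimes>" 70)
  where "x \<otimes> y \<equiv> tens C x y"

lemma triangulated: "triangulated C"
  and tensor_with_identity: "tensor_with_identity C"
  using tensor_triangulated unfolding tensor_triangulated_def by blast+

lemma additive: "additive C"
  and shift_autoequivalence: "autoequivalence C (shift C) (shiftm C)"
  using triangulated unfolding triangulated_def by blast+

lemma preadditive: "preadditive C"
  using additive unfolding additive_def by blast

lemma category: "category C"
  using preadditive unfolding preadditive_def by simp

subsection \<open>Additive and monoidal structure\<close>

lemma hom_objects: "f \<in> hom C x y \<Longrightarrow> x \<in> Ob C \<and> y \<in> Ob C"
  using category unfolding category_def hom_def by blast

lemma hom_dom: "f \<in> hom C x y \<Longrightarrow> dom C f = x"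
  unfolding hom_def by blast

lemma idm_hom: "x \<in> Ob C \<Longrightarrow> idm C x \<in> hom C x x"
  using category unfolding category_def by blast

lemma comp_hom: "f \<in> hom C x y \<Longrightarrow> g \<in> hom C y z \<Longrightarrow> comp C g f \<in> hom C x z"
  using category unfolding category_def by blast

lemma comp_idm_left: "f \<in> hom C x y \<Longrightarrow> comp C (idm C y) f = f"
  using category unfolding category_def by blast

lemma hzero_hom: "x \<in> Ob C \<Longrightarrow> y \<in> Ob C \<Longrightarrow> hzero C x y \<in> hom C x y"
  using preadditive unfolding preadditive_def by simp

lemma dom_hzero: "x \<in> Ob C \<Longrightarrow> y \<in> Ob C \<Longrightarrow> dom C (hzero C x y) = x"
  using hzero_hom hom_dom by blast

lemma hadd_hzero: "f \<in> hom C x y \<Longrightarrow> hadd C f (hzero C x y) = f"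
  using preadditive unfolding preadditive_def by simp

lemma hadd_commute: "f \<in> hom C x y \<Longrightarrow> g \<in> hom C x y \<Longrightarrow> hadd C f g = hadd C g f"
  using preadditive unfolding preadditive_def by simp

lemma hadd_hneg: "f \<in> hom C x y \<Longrightarrow> hneg C f \<in> hom C x y \<and> hadd C f (hneg C f) = hzero C x y"
  using preadditive unfolding preadditive_def by auto

lemma hadd_assoc:
  "f \<in> hom C x y \<Longrightarrow> g \<in> hom C x y \<Longrightarrow> h \<in> hom C x y \<Longrightarrow>
     hadd C (hadd C f g) h = hadd C f (hadd C g h)"
  using preadditive unfolding preadditive_def by auto

lemma comp_hadd:
  "f \<in> hom C x y \<Longrightarrow> g \<in> hom C x y \<Longrightarrow> h \<in> hom C y z \<Longrightarrow>
     comp C h (hadd C f g) = hadd C (comp C h f) (comp C h g)"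
  using preadditive unfolding preadditive_def by auto

lemma hadd_idem_eq_hzero:
  assumes f: "f \<in> hom C x y" and idem: "hadd C f f = f"
  shows "f = hzero C x y"
proof -
  have "hzero C x y = hadd C (hadd C f f) (hneg C f)"
    using idem hadd_hneg[OF f] by simp
  also have "\<dots> = f"
    using hadd_assoc[of f x y f "hneg C f"] hadd_hneg[OF f] hadd_hzero[OF f] f by simp
  finally show ?thesis
    by simp
qed

lemma comp_hzero_right:
  assumes g: "g \<in> hom C y w" and x: "x \<in> Ob C"
  shows "comp C g (hzero C x y) = hzero C x w"
proof -
  have z: "hzero C x y \<in> hom C x y"
    using hzero_hom hom_objects g x by blast
  have "comp C g (hzero C x y) = hadd C (comp C g (hzero C x y)) (comp C g (hzero C x y))"
    using comp_hadd[OF z z g] hadd_hzero[OF z] by simp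
  then show ?thesis
    using hadd_idem_eq_hzero comp_hom[OF z g] by metis
qed

lemma zero_obj_homs:
  "zero_obj C z \<Longrightarrow> x \<in> Ob C \<Longrightarrow> hom C z x = {hzero C z x} \<and> hom C x z = {hzero C x z}"
  unfolding zero_obj_def by blast

lemma zero_obj_Ob: "zero_obj C z \<Longrightarrow> z \<in> Ob C"
  unfolding zero_obj_def by blast

lemma ex_zero_obj: "\<exists>z. zero_obj C z"
  using additive unfolding additive_def by blast

lemma ex_biprod: "x \<in> Ob C \<Longrightarrow> y \<in> Ob C \<Longrightarrow> \<exists>s i1 i2 p1 p2. biprod C x y s i1 i2 p1 p2"
  using additive unfolding additive_def by blast

lemma biprod_Ob: "biprod C x y s i1 i2 p1 p2 \<Longrightarrow> x \<in> Ob C \<and> y \<in> Ob C \<and> s \<in> Ob C"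
  unfolding biprod_def by blast

lemma biprod_swap: "biprod C x y s i1 i2 p1 p2 \<Longrightarrow> biprod C y x s i2 i1 p2 p1"
  unfolding biprod_def using hadd_commute comp_hom by (metis (no_types))

definition isomorphic :: "'o \<Rightarrow> 'o \<Rightarrow> bool" (infix "\<cong>" 50)
  where "x \<cong> y \<longleftrightarrow> (\<exists>f. iso C f x y)"

lemma isomorphic_sym: "x \<cong> y \<Longrightarrow> y \<cong> x"
  unfolding isomorphic_def iso_def by blast

lemma isomorphic_refl: "x \<in> Ob C \<Longrightarrow> x \<cong> x"
  unfolding isomorphic_def iso_def using idm_hom comp_idm_left by blast

lemma zero_obj_isomorphic:
  assumes z: "zero_obj C z" and z': "zero_obj C z'"
  shows "z \<cong> z'"
proof -
  have Ob: "z \<in> Ob C" "z' \<in> Ob C"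
    using z z' zero_obj_Ob by blast+
  have zz': "hzero C z z' \<in> hom C z z'" and z'z: "hzero C z' z \<in> hom C z' z"
    using hzero_hom Ob by blast+
  moreover have "comp C (hzero C z' z) (hzero C z z') = idm C z"
    using comp_hom[OF zz' z'z] idm_hom[OF Ob(1)] zero_obj_homs[OF z Ob(1)] by auto
  moreover have "comp C (hzero C z z') (hzero C z' z) = idm C z'"
    using comp_hom[OF z'z zz'] idm_hom[OF Ob(2)] zero_obj_homs[OF z' Ob(2)] by auto
  ultimately show ?thesis
    unfolding isomorphic_def iso_def by blast
qed

text \<open>An isomorphism \<open>f: x \<rightarrow> y\<close> exhibits \<open>x\<close> as a biproduct of \<open>y\<close> and a zero object.\<close>

lemma thick_isomorphic_closed:
  assumes D: "thick C D" and x: "x \<in> D" and xy: "x \<cong> y"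
  shows "y \<in> D"
proof -
  obtain f g where f: "f \<in> hom C x y" and g: "g \<in> hom C y x"
    and gf: "comp C g f = idm C x" and fg: "comp C f g = idm C y"
    using xy unfolding isomorphic_def iso_def by blast
  obtain z where z: "zero_obj C z"
    using ex_zero_obj by blast
  have Ob: "x \<in> Ob C" "y \<in> Ob C" "z \<in> Ob C"
    using f hom_objects zero_obj_Ob[OF z] by blast+
  have zx: "hzero C z x \<in> hom C z x" and xz: "hzero C x z \<in> hom C x z"
    using hzero_hom Ob by blast+
  have "comp C (hzero C x z) (hzero C z x) = idm C z"
    using comp_hom[OF zx xz] idm_hom[OF Ob(3)] zero_obj_homs[OF z Ob(3)] by auto
  moreover have "comp C f (hzero C z x) = hzero C z y"
    using comp_hom[OF zx f] zero_obj_homs[OF z Ob(2)] by auto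
  moreover have "comp C (hzero C x z) g = hzero C y z"
    using comp_hom[OF g xz] zero_obj_homs[OF z Ob(2)] by auto
  moreover have "hadd C (comp C g f) (comp C (hzero C z x) (hzero C x z)) = idm C x"
    using gf comp_hzero_right[OF zx Ob(1)] hadd_hzero[OF idm_hom[OF Ob(1)]] by simp
  ultimately have "biprod C y z x g (hzero C z x) f (hzero C x z)"
    unfolding biprod_def using Ob f g fg zx xz by simp
  then show ?thesis
    using D x unfolding thick_def by blast
qed

lemma zero_obj_in_thick: "thick C D \<Longrightarrow> zero_obj C z \<Longrightarrow> z \<in> D"
  using thick_isomorphic_closed zero_obj_isomorphic unfolding thick_def by blast

lemma tens_Ob: "x \<in> Ob C \<Longrightarrow> y \<in> Ob C \<Longrightarrow> x \<otimes> y \<in> Ob C"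
  and tens_idm: "x \<in> Ob C \<Longrightarrow> y \<in> Ob C \<Longrightarrow> tensm C (idm C x) (idm C y) = idm C (x \<otimes> y)"
  and tensm_hom: "f \<in> hom C x y \<Longrightarrow> g \<in> hom C x' y' \<Longrightarrow> tensm C f g \<in> hom C (x \<otimes> x') (y \<otimes> y')"
  and unit_Ob: "unit C \<in> Ob C"
  using tensor_with_identity unfolding tensor_with_identity_def by meson+

lemma tensm_comp:
  "f \<in> hom C x y \<Longrightarrow> g \<in> hom C y z \<Longrightarrow> f' \<in> hom C x' y' \<Longrightarrow> g' \<in> hom C y' z' \<Longrightarrow>
     tensm C (comp C g f) (comp C g' f') = comp C (tensm C g g') (tensm C f f')"
  using tensor_with_identity unfolding tensor_with_identity_def by meson

lemma isomorphic_tensor: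
  assumes "x \<cong> x'" and "y \<cong> y'"
  shows "x \<otimes> y \<cong> x' \<otimes> y'"
proof -
  obtain f f' where f: "f \<in> hom C x x'" and f': "f' \<in> hom C x' x"
    and ff': "comp C f' f = idm C x" "comp C f f' = idm C x'"
    using assms(1) unfolding isomorphic_def iso_def by blast
  obtain g g' where g: "g \<in> hom C y y'" and g': "g' \<in> hom C y' y"
    and gg': "comp C g' g = idm C y" "comp C g g' = idm C y'"
    using assms(2) unfolding isomorphic_def iso_def by blast
  have "x \<in> Ob C" "x' \<in> Ob C" "y \<in> Ob C" "y' \<in> Ob C"
    using f g hom_objects by blast+
  then have "comp C (tensm C f' g') (tensm C f g) = idm C (x \<otimes> y)"
    and "comp C (tensm C f g) (tensm C f' g') = idm C (x' \<otimes> y')"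
    using tensm_comp[OF f f' g g'] tensm_comp[OF f' f g' g] ff' gg' tens_idm by simp_all
  then show ?thesis
    unfolding isomorphic_def iso_def using tensm_hom[OF f g] tensm_hom[OF f' g'] by blast
qed

lemma isomorphic_assoc: "x \<in> Ob C \<Longrightarrow> y \<in> Ob C \<Longrightarrow> z \<in> Ob C \<Longrightarrow> x \<otimes> y \<otimes> z \<cong> x \<otimes> (y \<otimes> z)"
  using tensor_with_identity unfolding tensor_with_identity_def isomorphic_def by meson

lemma isomorphic_lunit: "x \<in> Ob C \<Longrightarrow> unit C \<otimes> x \<cong> x"
  using tensor_with_identity unfolding tensor_with_identity_def nat_iso_def isomorphic_def by auto

lemma isomorphic_runit: "x \<in> Ob C \<Longrightarrow> x \<otimes> unit C \<cong> x"
  using tensor_with_identity unfolding tensor_with_identity_def nat_iso_def isomorphic_def by auto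

subsection \<open>Thick subcategories and exact functors\<close>

lemma tri_zero: "x \<in> Ob C \<Longrightarrow> zero_obj C z \<Longrightarrow> (idm C x, hzero C x z, hzero C z (shift C x)) \<in> tri C"
  using triangulated unfolding triangulated_def by meson

lemma tri_rotate: "(f, g, h) \<in> tri C \<Longrightarrow> (g, h, hneg C (shiftm C f)) \<in> tri C"
  using triangulated unfolding triangulated_def by meson

lemma tri_triangle: "t \<in> tri C \<Longrightarrow> triangle C t"
  using triangulated unfolding triangulated_def by meson

lemma tri_dom_Ob: "(f, g, h) \<in> tri C \<Longrightarrow> dom C f \<in> Ob C \<and> dom C g \<in> Ob C \<and> dom C h \<in> Ob C"
  using tri_triangle[of "(f, g, h)"] category unfolding triangle_def category_def by simp

lemma shift_Ob: "x \<in> Ob C \<Longrightarrow> shift C x \<in> Ob C"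
  and shiftm_idm: "x \<in> Ob C \<Longrightarrow> shiftm C (idm C x) = idm C (shift C x)"
  using shift_autoequivalence
  unfolding autoequivalence_def additive_functor_def endofunctor_def by meson+

lemma thick_tri:
  assumes "thick C D" and "(f, g, h) \<in> tri C"
  shows "dom C f \<in> D \<Longrightarrow> dom C g \<in> D \<Longrightarrow> dom C h \<in> D"
    and "dom C g \<in> D \<Longrightarrow> dom C h \<in> D \<Longrightarrow> dom C f \<in> D"
    and "dom C h \<in> D \<Longrightarrow> dom C f \<in> D \<Longrightarrow> dom C g \<in> D"
  using assms unfolding thick_def by blast+

lemma thickI:
  assumes "D \<subseteq> Ob C" and "z \<in> D" and "zero_obj C z"
    and "\<And>x. x \<in> Ob C \<Longrightarrow> x \<in> D \<longleftrightarrow> shift C x \<in> D"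
    and "\<And>f g h. (f, g, h) \<in> tri C \<Longrightarrow> dom C f \<in> D \<Longrightarrow> dom C g \<in> D \<Longrightarrow> dom C h \<in> D"
    and "\<And>f g h. (f, g, h) \<in> tri C \<Longrightarrow> dom C g \<in> D \<Longrightarrow> dom C h \<in> D \<Longrightarrow> dom C f \<in> D"
    and "\<And>f g h. (f, g, h) \<in> tri C \<Longrightarrow> dom C h \<in> D \<Longrightarrow> dom C f \<in> D \<Longrightarrow> dom C g \<in> D"
    and "\<And>x y s i1 i2 p1 p2. biprod C x y s i1 i2 p1 p2 \<Longrightarrow> s \<in> D \<Longrightarrow> x \<in> D"
  shows "thick C D"
  unfolding thick_def using assms by blast

lemma thick_shift_iff: "thick C D \<Longrightarrow> x \<in> Ob C \<Longrightarrow> x \<in> D \<longleftrightarrow> shift C x \<in> D"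
  unfolding thick_def by blast

lemma thick_summand: "thick C D \<Longrightarrow> biprod C x y s i1 i2 p1 p2 \<Longrightarrow> s \<in> D \<Longrightarrow> x \<in> D"
  unfolding thick_def by blast

lemma thick_Inter:
  assumes thick: "\<And>D. D \<in> \<D> \<Longrightarrow> thick C D"
  shows "thick C (Ob C \<inter> \<Inter>\<D>)"
proof -
  obtain z where z: "zero_obj C z"
    using ex_zero_obj by blast
  show ?thesis
  proof (rule thickI[OF _ _ z])
    show "z \<in> Ob C \<inter> \<Inter>\<D>"
      using zero_obj_Ob[OF z] zero_obj_in_thick[OF thick z] by blast
    show "x \<in> Ob C \<inter> \<Inter>\<D> \<longleftrightarrow> shift C x \<in> Ob C \<inter> \<Inter>\<D>" if "x \<in> Ob C" for x
      using thick_shift_iff[OF thick that] shift_Ob[OF that] that by blast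
    show "x \<in> Ob C \<inter> \<Inter>\<D>" if "biprod C x y s i1 i2 p1 p2" "s \<in> Ob C \<inter> \<Inter>\<D>"
      for x y s i1 i2 p1 p2
      using that biprod_Ob thick_summand[OF thick] by blast
  qed (use tri_dom_Ob thick_tri[OF thick] in blast)+
qed

lemma exact_functor_Ob: "exact_functor C F Fm \<Longrightarrow> x \<in> Ob C \<Longrightarrow> F x \<in> Ob C"
  unfolding exact_functor_def additive_functor_def endofunctor_def by blast

lemma exact_functor_tri:
  assumes F: "exact_functor C F Fm" and t: "(f, g, h) \<in> tri C"
  obtains f' g' h' where "(f', g', h') \<in> tri C"
    and "dom C f' = F (dom C f)" "dom C g' = F (dom C g)" "dom C h' = F (dom C h)"
proof -
  have Fm: "\<And>x y u. u \<in> hom C x y \<Longrightarrow> Fm u \<in> hom C (F x) (F y)"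
    using F unfolding exact_functor_def additive_functor_def endofunctor_def by blast
  obtain \<phi> where \<phi>: "nat_iso C (F \<circ> shift C) (Fm \<circ> shiftm C) (shift C \<circ> F) (shiftm C \<circ> Fm) \<phi>"
    and Ft: "(Fm f, Fm g, comp C (\<phi> (dom C f)) (Fm h)) \<in> tri C"
    using F t unfolding exact_functor_def by blast
  have "f \<in> hom C (dom C f) (cod C f)" "g \<in> hom C (dom C g) (cod C g)"
    and "h \<in> hom C (dom C h) (shift C (dom C f))"
    using tri_triangle[OF t] unfolding triangle_def hom_def by auto
  moreover have "\<phi> (dom C f) \<in> hom C (F (shift C (dom C f))) (shift C (F (dom C f)))"
    using \<phi> tri_dom_Ob[OF t] unfolding nat_iso_def iso_def by auto
  ultimately have "dom C (Fm f) = F (dom C f)" "dom C (Fm g) = F (dom C g)"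
    "dom C (comp C (\<phi> (dom C f)) (Fm h)) = F (dom C h)"
    using Fm comp_hom hom_dom by blast+
  then show thesis
    using that Ft by blast
qed

lemma additive_functor_hzero:
  assumes F: "additive_functor C F Fm" and x: "x \<in> Ob C" and y: "y \<in> Ob C"
  shows "Fm (hzero C x y) = hzero C (F x) (F y)"
proof (rule hadd_idem_eq_hzero)
  have z: "hzero C x y \<in> hom C x y"
    using hzero_hom x y by blast
  then show "Fm (hzero C x y) \<in> hom C (F x) (F y)"
    using F unfolding additive_functor_def endofunctor_def by blast
  have "Fm (hadd C (hzero C x y) (hzero C x y)) = hadd C (Fm (hzero C x y)) (Fm (hzero C x y))"
    using F z unfolding additive_functor_def by blast
  then show "hadd C (Fm (hzero C x y)) (Fm (hzero C x y)) = Fm (hzero C x y)"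
    using hadd_hzero[OF z] by simp
qed

lemma exact_functor_biprod:
  assumes F: "exact_functor C F Fm" and b: "biprod C x y s i1 i2 p1 p2"
  shows "biprod C (F x) (F y) (F s) (Fm i1) (Fm i2) (Fm p1) (Fm p2)"
proof -
  have add: "additive_functor C F Fm"
    using F unfolding exact_functor_def by blast
  then have Fm: "\<And>x y u. u \<in> hom C x y \<Longrightarrow> Fm u \<in> hom C (F x) (F y)"
    and Fm_idm: "\<And>x. x \<in> Ob C \<Longrightarrow> Fm (idm C x) = idm C (F x)"
    and Fm_comp: "\<And>x y z u v. u \<in> hom C x y \<Longrightarrow> v \<in> hom C y z \<Longrightarrow> Fm (comp C v u) = comp C (Fm v) (Fm u)"
    and Fm_hadd: "\<And>x y u v. u \<in> hom C x y \<Longrightarrow> v \<in> hom C x y \<Longrightarrow> Fm (hadd C u v) = hadd C (Fm u) (Fm v)"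
    unfolding additive_functor_def endofunctor_def by blast+
  have Ob: "x \<in> Ob C" "y \<in> Ob C" "s \<in> Ob C"
    and maps: "i1 \<in> hom C x s" "i2 \<in> hom C y s" "p1 \<in> hom C s x" "p2 \<in> hom C s y"
    and eqs: "comp C p1 i1 = idm C x" "comp C p2 i2 = idm C y"
      "comp C p1 i2 = hzero C y x" "comp C p2 i1 = hzero C x y"
      "hadd C (comp C i1 p1) (comp C i2 p2) = idm C s"
    using b unfolding biprod_def by auto
  have "comp C (Fm p1) (Fm i1) = idm C (F x)" "comp C (Fm p2) (Fm i2) = idm C (F y)"
    "comp C (Fm p1) (Fm i2) = hzero C (F y) (F x)" "comp C (Fm p2) (Fm i1) = hzero C (F x) (F y)"
    using Fm_comp maps eqs Fm_idm Ob additive_functor_hzero[OF add] by (metis (no_types))+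
  moreover have "hadd C (comp C (Fm i1) (Fm p1)) (comp C (Fm i2) (Fm p2)) = idm C (F s)"
    using Fm_hadd[OF comp_hom comp_hom] Fm_comp maps eqs(5) Fm_idm Ob(3) by (metis (no_types))
  ultimately show ?thesis
    unfolding biprod_def using Ob maps Fm exact_functor_Ob[OF F] by blast
qed

text \<open>The triangle \<open>w \<rightarrow> w \<rightarrow> 0 \<rightarrow> \<Sigma>w\<close> shows that the preimage contains a zero object;
  rotating the triangle \<open>x \<rightarrow> x \<rightarrow> 0 \<rightarrow> \<Sigma>x\<close> shows that it is closed under \<open>\<Sigma>\<close> and \<open>\<Sigma>\<^sup>-\<^sup>1\<close>.\<close>

lemma thick_exact_vimage:
  assumes E: "thick C E" and F: "exact_functor C F Fm" and w: "w \<in> Ob C" "F w \<in> E"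
  shows "thick C {x \<in> Ob C. F x \<in> E}"
proof -
  have two_of_three:
    "F (dom C f) \<in> E \<Longrightarrow> F (dom C g) \<in> E \<Longrightarrow> F (dom C h) \<in> E"
    "F (dom C g) \<in> E \<Longrightarrow> F (dom C h) \<in> E \<Longrightarrow> F (dom C f) \<in> E"
    "F (dom C h) \<in> E \<Longrightarrow> F (dom C f) \<in> E \<Longrightarrow> F (dom C g) \<in> E"
    if "(f, g, h) \<in> tri C" for f g h
    using exact_functor_tri[OF F that] thick_tri[OF E] by metis+
  obtain z where z: "zero_obj C z"
    using ex_zero_obj by blast
  then have z_Ob: "z \<in> Ob C"
    using zero_obj_Ob by blast
  have Fz: "F z \<in> E"
    using two_of_three(1)[OF tri_zero[OF w(1) z]] w z_Ob shift_Ob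
      hom_dom[OF idm_hom[OF w(1)]] by (simp add: dom_hzero)
  show ?thesis
  proof (rule thickI[OF _ _ z])
    show "z \<in> {x \<in> Ob C. F x \<in> E}"
      using z_Ob Fz by blast
    show "x \<in> {x \<in> Ob C. F x \<in> E} \<longleftrightarrow> shift C x \<in> {x \<in> Ob C. F x \<in> E}" if x: "x \<in> Ob C" for x
    proof -
      have "dom C (hneg C (shiftm C (idm C x))) = shift C x"
        using shiftm_idm[OF x] hom_dom[OF conjunct1[OF hadd_hneg[OF idm_hom[OF shift_Ob[OF x]]]]] by simp
      then show ?thesis
        using two_of_three[OF tri_rotate[OF tri_zero[OF x z]]] Fz x z_Ob shift_Ob
        by (auto simp: dom_hzero)
    qed
    show "x \<in> {x \<in> Ob C. F x \<in> E}"
      if "biprod C x y s i1 i2 p1 p2" "s \<in> {x \<in> Ob C. F x \<in> E}" for x y s i1 i2 p1 p2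
      using exact_functor_biprod[OF F that(1)] that biprod_Ob thick_summand[OF E] by blast
  qed (use tri_dom_Ob two_of_three in blast)+
qed

lemma thick_exact_vimages:
  assumes E: "thick C E" and F: "\<And>i. i \<in> I \<Longrightarrow> exact_functor C (F i) (Fm i)"
    and z: "zero_obj C z" "\<And>i. i \<in> I \<Longrightarrow> F i z \<in> E"
  shows "thick C {x \<in> Ob C. \<forall>i\<in>I. F i x \<in> E}"
proof -
  have "thick C (Ob C \<inter> \<Inter>((\<lambda>i. {x \<in> Ob C. F i x \<in> E}) ` I))"
    using thick_exact_vimage[OF E F zero_obj_Ob[OF z(1)] z(2)] by (intro thick_Inter) blast
  moreover have "Ob C \<inter> \<Inter>((\<lambda>i. {x \<in> Ob C. F i x \<in> E}) ` I) = {x \<in> Ob C. \<forall>i\<in>I. F i x \<in> E}"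
    by blast
  ultimately show ?thesis
    by simp
qed

lemma exact_tens_left: "x \<in> Ob C \<Longrightarrow> exact_functor C (tens C x) (tensm C (idm C x))"
  and exact_tens_right: "x \<in> Ob C \<Longrightarrow> exact_functor C (\<lambda>y. y \<otimes> x) (\<lambda>f. tensm C f (idm C x))"
  using tensor_triangulated unfolding tensor_triangulated_def by blast+

subsection \<open>Thick tensor ideals\<close>

lemma ttid_thick: "thick_tensor_ideal C D \<Longrightarrow> thick C D"
  and ttid_subset_Ob: "thick_tensor_ideal C D \<Longrightarrow> D \<subseteq> Ob C"
  and ttid_biprod: "thick_tensor_ideal C D \<Longrightarrow> biprod C x y s i1 i2 p1 p2 \<Longrightarrow> x \<in> D \<Longrightarrow> y \<in> D \<Longrightarrow> s \<in> D"
  and ttid_tens_left: "thick_tensor_ideal C D \<Longrightarrow> x \<in> D \<Longrightarrow> y \<in> Ob C \<Longrightarrow> x \<otimes> y \<in> D"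
  and ttid_tens_right: "thick_tensor_ideal C D \<Longrightarrow> x \<in> Ob C \<Longrightarrow> y \<in> D \<Longrightarrow> x \<otimes> y \<in> D"
  unfolding thick_tensor_ideal_def tensor_ideal_def by blast+

lemma ttidI:
  assumes "thick C D"
    and "\<And>x y s i1 i2 p1 p2. biprod C x y s i1 i2 p1 p2 \<Longrightarrow> x \<in> D \<Longrightarrow> y \<in> D \<Longrightarrow> s \<in> D"
    and "\<And>x y. x \<in> D \<Longrightarrow> y \<in> Ob C \<Longrightarrow> x \<otimes> y \<in> D"
    and "\<And>x y. x \<in> Ob C \<Longrightarrow> y \<in> D \<Longrightarrow> x \<otimes> y \<in> D"
  shows "thick_tensor_ideal C D"
proof -
  have "D \<subseteq> Ob C" "\<exists>z\<in>D. zero_obj C z"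
    using assms(1) unfolding thick_def by blast+
  then show ?thesis
    using assms unfolding thick_tensor_ideal_def tensor_ideal_def by blast
qed

lemma ttid_isomorphic_closed: "thick_tensor_ideal C D \<Longrightarrow> x \<in> D \<Longrightarrow> x \<cong> y \<Longrightarrow> y \<in> D"
  using thick_isomorphic_closed ttid_thick by blast

lemma ttid_zero_obj: "thick_tensor_ideal C D \<Longrightarrow> zero_obj C z \<Longrightarrow> z \<in> D"
  using zero_obj_in_thick ttid_thick by blast

lemma ttid_Ob: "thick_tensor_ideal C (Ob C)"
proof -
  obtain z where z: "zero_obj C z"
    using ex_zero_obj by blast
  have "thick C (Ob C)"
    by (rule thickI[OF _ zero_obj_Ob[OF z] z]) (simp_all add: shift_Ob tri_dom_Ob biprod_Ob)
  then show ?thesis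
    by (rule ttidI) (simp_all add: biprod_Ob tens_Ob)
qed

lemma ttid_Inter:
  assumes "\<D> \<noteq> {}" and ttid: "\<And>D. D \<in> \<D> \<Longrightarrow> thick_tensor_ideal C D"
  shows "thick_tensor_ideal C (\<Inter>\<D>)"
proof (rule ttidI)
  have "Ob C \<inter> \<Inter>\<D> = \<Inter>\<D>"
    using assms ttid_subset_Ob by blast
  moreover have "thick C (Ob C \<inter> \<Inter>\<D>)"
    using thick_Inter ttid ttid_thick by blast
  ultimately show "thick C (\<Inter>\<D>)"
    by simp
qed (use ttid ttid_biprod ttid_tens_left ttid_tens_right in blast)+

lemma ttid_directed_Union:
  assumes "\<D> \<noteq> {}" and ttid: "\<And>D. D \<in> \<D> \<Longrightarrow> thick_tensor_ideal C D"
    and directed: "\<And>D1 D2. D1 \<in> \<D> \<Longrightarrow> D2 \<in> \<D> \<Longrightarrow> \<exists>D\<in>\<D>. D1 \<union> D2 \<subseteq> D"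
  shows "thick_tensor_ideal C (\<Union>\<D>)"
proof -
  have two: "\<exists>D\<in>\<D>. x \<in> D \<and> y \<in> D" if xy: "x \<in> \<Union>\<D>" "y \<in> \<Union>\<D>" for x y
  proof -
    obtain D1 D2 where "D1 \<in> \<D>" "x \<in> D1" "D2 \<in> \<D>" "y \<in> D2"
      using xy by blast
    moreover obtain D where "D \<in> \<D>" "D1 \<union> D2 \<subseteq> D"
      using directed calculation(1,3) by blast
    ultimately show ?thesis
      by blast
  qed
  obtain z where z: "zero_obj C z"
    using ex_zero_obj by blast
  have "thick C (\<Union>\<D>)"
  proof (rule thickI[OF _ _ z])
    show "\<Union>\<D> \<subseteq> Ob C"
      using ttid ttid_subset_Ob by blast
    show "z \<in> \<Union>\<D>"
      using assms(1) ttid ttid_zero_obj[OF _ z] by blast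
    show "x \<in> \<Union>\<D> \<longleftrightarrow> shift C x \<in> \<Union>\<D>" if "x \<in> Ob C" for x
      using thick_shift_iff[OF ttid_thick[OF ttid] that] by blast
    show "x \<in> \<Union>\<D>" if "biprod C x y s i1 i2 p1 p2" "s \<in> \<Union>\<D>" for x y s i1 i2 p1 p2
      using that thick_summand[OF ttid_thick[OF ttid]] by blast
    show "dom C h \<in> \<Union>\<D>" if "(f, g, h) \<in> tri C" "dom C f \<in> \<Union>\<D>" "dom C g \<in> \<Union>\<D>" for f g h
      using two[OF that(2,3)] thick_tri(1)[OF ttid_thick[OF ttid] that(1)] by blast
    show "dom C f \<in> \<Union>\<D>" if "(f, g, h) \<in> tri C" "dom C g \<in> \<Union>\<D>" "dom C h \<in> \<Union>\<D>" for f g h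
      using two[OF that(2,3)] thick_tri(2)[OF ttid_thick[OF ttid] that(1)] by blast
    show "dom C g \<in> \<Union>\<D>" if "(f, g, h) \<in> tri C" "dom C h \<in> \<Union>\<D>" "dom C f \<in> \<Union>\<D>" for f g h
      using two[OF that(2,3)] thick_tri(3)[OF ttid_thick[OF ttid] that(1)] by blast
  qed
  then show ?thesis
  proof (rule ttidI)
    show "s \<in> \<Union>\<D>" if "biprod C x y s i1 i2 p1 p2" "x \<in> \<Union>\<D>" "y \<in> \<Union>\<D>" for x y s i1 i2 p1 p2
      using two[OF that(2,3)] ttid_biprod[OF ttid, OF _ that(1)] by blast
  qed (use ttid ttid_tens_left ttid_tens_right in blast)+
qed

lemma gen_superset: "X \<subseteq> gen C X"
  unfolding gen_def by blast

lemma gen_least: "thick_tensor_ideal C D \<Longrightarrow> X \<subseteq> D \<Longrightarrow> gen C X \<subseteq> D"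
  unfolding gen_def by blast

lemma gen_mono: "X \<subseteq> Y \<Longrightarrow> gen C X \<subseteq> gen C Y"
  unfolding gen_def by blast

lemma gen_eqI: "(\<And>G. thick_tensor_ideal C G \<Longrightarrow> X \<subseteq> G \<longleftrightarrow> Y \<subseteq> G) \<Longrightarrow> gen C X = gen C Y"
  unfolding gen_def by (metis (no_types, lifting))

lemma gen_ttid: "X \<subseteq> Ob C \<Longrightarrow> thick_tensor_ideal C (gen C X)"
  unfolding gen_def using ttid_Ob by (intro ttid_Inter) auto

lemma gen_subset_Ob: "X \<subseteq> Ob C \<Longrightarrow> gen C X \<subseteq> Ob C"
  using gen_least ttid_Ob by blast

lemma gen_ttid_eq: "thick_tensor_ideal C D \<Longrightarrow> gen C D = D"
  using gen_least gen_superset by blast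

text \<open>Without \<open>X \<subseteq> Ob C\<close> no thick tensor ideal contains \<open>X\<close>, and \<open>gen C X\<close> is the
  empty intersection \<open>UNIV\<close>; the next two facts hold in that case too.\<close>

lemma gen_idem: "gen C (gen C X) = gen C X"
proof -
  have "gen C (gen C X) = \<Inter>{D. thick_tensor_ideal C D \<and> gen C X \<subseteq> D}"
    by (rule gen_def)
  also have "\<dots> = \<Inter>{D. thick_tensor_ideal C D \<and> X \<subseteq> D}"
    using gen_least gen_superset by (intro arg_cong[where f = Inter] Collect_cong) blast
  also have "\<dots> = gen C X"
    by (rule gen_def[symmetric])
  finally show ?thesis .
qed

lemma gen_isomorphic_closed: "x \<in> gen C X \<Longrightarrow> x \<cong> y \<Longrightarrow> y \<in> gen C X"
proof (cases "X \<subseteq> Ob C")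
  case True
  then show "x \<in> gen C X \<Longrightarrow> x \<cong> y \<Longrightarrow> y \<in> gen C X"
    using ttid_isomorphic_closed gen_ttid by blast
next
  case False
  then have "gen C X = UNIV"
    unfolding gen_def using ttid_subset_Ob by blast
  then show "y \<in> gen C X"
    by blast
qed

lemma gen_mono_isomorphic:
  assumes "\<And>x. x \<in> X \<Longrightarrow> \<exists>y\<in>Y. y \<cong> x"
  shows "gen C X \<subseteq> gen C Y"
proof -
  have "X \<subseteq> gen C Y"
    using assms gen_superset gen_isomorphic_closed by blast
  then show ?thesis
    using gen_mono gen_idem by metis
qed

lemma gen_Un_gen: "gen C (gen C X \<union> gen C Y) = gen C (X \<union> Y)"
proof (rule subset_antisym)
  have "gen C X \<union> gen C Y \<subseteq> gen C (X \<union> Y)"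
    by (intro Un_least gen_mono) simp_all
  then have "gen C (gen C X \<union> gen C Y) \<subseteq> gen C (gen C (X \<union> Y))"
    by (rule gen_mono)
  then show "gen C (gen C X \<union> gen C Y) \<subseteq> gen C (X \<union> Y)"
    by (simp only: gen_idem)
  show "gen C (X \<union> Y) \<subseteq> gen C (gen C X \<union> gen C Y)"
    by (intro gen_mono Un_mono gen_superset)
qed

lemma gen_eq_finite_union:
  assumes X: "X \<subseteq> Ob C"
  shows "gen C X = (\<Union>Y\<in>{Y. finite Y \<and> Y \<subseteq> X}. gen C Y)"
proof
  let ?\<D> = "gen C ` {Y. finite Y \<and> Y \<subseteq> X}"
  have "thick_tensor_ideal C (\<Union>?\<D>)"
  proof (rule ttid_directed_Union)
    show "?\<D> \<noteq> {}"
      by blast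
    show "\<And>D. D \<in> ?\<D> \<Longrightarrow> thick_tensor_ideal C D"
      using X gen_ttid by blast
    show "\<exists>D\<in>?\<D>. D1 \<union> D2 \<subseteq> D" if D: "D1 \<in> ?\<D>" "D2 \<in> ?\<D>" for D1 D2
    proof -
      obtain Y1 Y2 where "finite Y1" "Y1 \<subseteq> X" "D1 = gen C Y1" "finite Y2" "Y2 \<subseteq> X" "D2 = gen C Y2"
        using D by blast
      then show ?thesis
        using gen_mono[of Y1 "Y1 \<union> Y2"] gen_mono[of Y2 "Y1 \<union> Y2"]
        by (intro bexI[of _ "gen C (Y1 \<union> Y2)"]) auto
    qed
  qed
  moreover have "X \<subseteq> \<Union>?\<D>"
    using gen_superset[of "{x}" for x] by blast
  ultimately show "gen C X \<subseteq> \<Union>?\<D>"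
    by (rule gen_least)
qed (use gen_mono in blast)

text \<open>Finitely many generators can be replaced by their biproduct.\<close>

lemma gen_finite_principal:
  assumes "finite X" and "X \<subseteq> Ob C"
  shows "\<exists>w\<in>Ob C. gen C X = gen C {w}"
  using assms
proof (induction X rule: finite_induct)
  case empty
  obtain z where z: "zero_obj C z"
    using ex_zero_obj by blast
  then have "gen C {} = gen C {z}"
    by (intro gen_eqI) (simp add: ttid_zero_obj)
  then show ?case
    using zero_obj_Ob[OF z] by blast
next
  case (insert x X)
  then obtain w where w: "w \<in> Ob C" "gen C X = gen C {w}" and x: "x \<in> Ob C"
    by blast
  obtain s i1 i2 p1 p2 where b: "biprod C w x s i1 i2 p1 p2"
    using ex_biprod[OF w(1) x] by blast
  have "gen C (insert x X) = gen C {s}"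
  proof (rule gen_eqI)
    fix G
    assume G: "thick_tensor_ideal C G"
    show "insert x X \<subseteq> G \<longleftrightarrow> {s} \<subseteq> G"
    proof
      assume "insert x X \<subseteq> G"
      then have "w \<in> G" "x \<in> G"
        using gen_least[OF G] w(2) gen_superset[of "{w}"] by blast+
      then show "{s} \<subseteq> G"
        using ttid_biprod[OF G b] by simp
    next
      assume "{s} \<subseteq> G"
      then have "w \<in> G" "x \<in> G"
        using thick_summand[OF ttid_thick[OF G] b] thick_summand[OF ttid_thick[OF G] biprod_swap[OF b]]
        by simp_all
      then show "insert x X \<subseteq> G"
        using gen_least[OF G, of "{w}"] w(2) gen_superset[of X] by blast
    qed
  qed
  then show ?case
    using biprod_Ob[OF b] by blast
qed

subsection \<open>Products of thick tensor ideals\<close>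

definition tensor_set :: "'o set \<Rightarrow> 'o set \<Rightarrow> 'o set" (infixl "\<odot>" 70)
  where "A \<odot> B = {x \<otimes> y | x y. x \<in> A \<and> y \<in> B}"

lemma tensor_setI: "x \<in> A \<Longrightarrow> y \<in> B \<Longrightarrow> x \<otimes> y \<in> A \<odot> B"
  unfolding tensor_set_def by blast

lemma tensor_setE:
  assumes "v \<in> A \<odot> B"
  obtains x y where "x \<in> A" "y \<in> B" "v = x \<otimes> y"
  using assms unfolding tensor_set_def by blast

lemma tensor_set_subset_Ob: "A \<subseteq> Ob C \<Longrightarrow> B \<subseteq> Ob C \<Longrightarrow> A \<odot> B \<subseteq> Ob C"
  unfolding tensor_set_def using tens_Ob by blast

lemma tensor_set_mono: "A \<subseteq> A' \<Longrightarrow> B \<subseteq> B' \<Longrightarrow> A \<odot> B \<subseteq> A' \<odot> B'"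
  unfolding tensor_set_def by blast

lemma tensor_set_Un_left: "(A \<union> A') \<odot> B = A \<odot> B \<union> A' \<odot> B"
  and tensor_set_Un_right: "A \<odot> (B \<union> B') = A \<odot> B \<union> A \<odot> B'"
  unfolding tensor_set_def by blast+

lemma gen_fin_coprods:
  assumes S: "S \<subseteq> Ob C"
  shows "gen C (fin_coprods C S) = gen C S"
proof (rule gen_eqI)
  fix G
  assume G: "thick_tensor_ideal C G"
  show "fin_coprods C S \<subseteq> G \<longleftrightarrow> S \<subseteq> G"
  proof
    assume coprods: "fin_coprods C S \<subseteq> G"
    show "S \<subseteq> G"
    proof
      fix b
      assume b: "b \<in> S"
      obtain z where z: "zero_obj C z"
        using ex_zero_obj by blast
      obtain s i1 i2 p1 p2 where zb: "biprod C z b s i1 i2 p1 p2"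
        using ex_biprod zero_obj_Ob[OF z] b S by blast
      then have "s \<in> G"
        using coprods fin_coprods.step[OF fin_coprods.empty[OF z] b] by blast
      then show "b \<in> G"
        using thick_summand[OF ttid_thick[OF G] biprod_swap[OF zb]] by blast
    qed
  next
    assume "S \<subseteq> G"
    show "fin_coprods C S \<subseteq> G"
    proof
      fix v
      assume "v \<in> fin_coprods C S"
      then show "v \<in> G"
        by induction (use G ttid_zero_obj ttid_biprod \<open>S \<subseteq> G\<close> in blast)+
    qed
  qed
qed

lemma gen_prod_cls: "A \<subseteq> Ob C \<Longrightarrow> B \<subseteq> Ob C \<Longrightarrow> gen C (prod_cls C A B) = gen C (A \<odot> B)"
  unfolding prod_cls_def using gen_fin_coprods[OF tensor_set_subset_Ob] by (simp add: tensor_set_def)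

lemma ttid_exact_vimages:
  assumes G: "thick_tensor_ideal C G" and F: "\<And>i. i \<in> I \<Longrightarrow> exact_functor C (F i) (Fm i)"
    and z: "zero_obj C z" "\<And>i. i \<in> I \<Longrightarrow> F i z \<in> G"
    and tens_left: "\<And>x u. x \<in> Ob C \<Longrightarrow> u \<in> Ob C \<Longrightarrow> \<forall>i\<in>I. F i x \<in> G \<Longrightarrow> \<forall>i\<in>I. F i (x \<otimes> u) \<in> G"
    and tens_right: "\<And>x u. x \<in> Ob C \<Longrightarrow> u \<in> Ob C \<Longrightarrow> \<forall>i\<in>I. F i x \<in> G \<Longrightarrow> \<forall>i\<in>I. F i (u \<otimes> x) \<in> G"
  shows "thick_tensor_ideal C {x \<in> Ob C. \<forall>i\<in>I. F i x \<in> G}"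
proof (rule ttidI)
  show "thick C {x \<in> Ob C. \<forall>i\<in>I. F i x \<in> G}"
    by (rule thick_exact_vimages[OF ttid_thick[OF G] F z])
  show "s \<in> {x \<in> Ob C. \<forall>i\<in>I. F i x \<in> G}"
    if b: "biprod C x y s i1 i2 p1 p2" and "x \<in> {x \<in> Ob C. \<forall>i\<in>I. F i x \<in> G}"
      and "y \<in> {x \<in> Ob C. \<forall>i\<in>I. F i x \<in> G}" for x y s i1 i2 p1 p2
    using that ttid_biprod[OF G exact_functor_biprod[OF F b]] biprod_Ob[OF b] by blast
qed (use tens_Ob tens_left tens_right in blast)+

text \<open>The residuals \<open>{v. (A \<otimes> \<C>) \<otimes> v \<subseteq> G}\<close> and \<open>{w. w \<otimes> (\<C> \<otimes> B) \<subseteq> G}\<close> are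
  intersections of preimages of \<open>G\<close> under exact functors; the middle factor \<open>\<C>\<close> absorbs
  objects tensored onto the side facing \<open>A\<close> (resp. \<open>B\<close>).\<close>

lemma ttid_tensor_residual_left:
  assumes G: "thick_tensor_ideal C G" and A: "A \<subseteq> Ob C"
  shows "thick_tensor_ideal C {v \<in> Ob C. \<forall>a \<in> A \<odot> Ob C. a \<otimes> v \<in> G}"
proof -
  have AOb: "A \<odot> Ob C \<subseteq> Ob C"
    using tensor_set_subset_Ob[OF A] by blast
  obtain z where z: "zero_obj C z"
    using ex_zero_obj by blast
  show ?thesis
  proof (rule ttid_exact_vimages[where F = "tens C" and Fm = "\<lambda>a. tensm C (idm C a)", OF G _ z])
    show "\<forall>a\<in>A \<odot> Ob C. a \<otimes> (v \<otimes> u) \<in> G"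
      if "v \<in> Ob C" "u \<in> Ob C" "\<forall>a\<in>A \<odot> Ob C. a \<otimes> v \<in> G" for v u
      using that ttid_tens_left[OF G] ttid_isomorphic_closed[OF G _ isomorphic_assoc] AOb by blast
    show "\<forall>a\<in>A \<odot> Ob C. a \<otimes> (u \<otimes> v) \<in> G"
      if v: "v \<in> Ob C" and u: "u \<in> Ob C" and G_v: "\<forall>a\<in>A \<odot> Ob C. a \<otimes> v \<in> G" for v u
    proof
      fix a
      assume "a \<in> A \<odot> Ob C"
      then obtain x u' where x: "x \<in> A" and u': "u' \<in> Ob C" and a: "a = x \<otimes> u'"
        by (rule tensor_setE)
      have x_Ob: "x \<in> Ob C"
        using x A by blast
      have "x \<otimes> (u' \<otimes> u) \<otimes> v \<in> G"
        using G_v tensor_setI[OF x tens_Ob[OF u' u]] by blast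
      moreover have "x \<otimes> (u' \<otimes> u) \<otimes> v \<cong> x \<otimes> u' \<otimes> u \<otimes> v"
        using isomorphic_tensor[OF isomorphic_sym[OF isomorphic_assoc[OF x_Ob u' u]] isomorphic_refl[OF v]] .
      moreover have "x \<otimes> u' \<otimes> u \<otimes> v \<cong> x \<otimes> u' \<otimes> (u \<otimes> v)"
        using isomorphic_assoc[OF tens_Ob[OF x_Ob u'] u v] .
      ultimately show "a \<otimes> (u \<otimes> v) \<in> G"
        unfolding a using ttid_isomorphic_closed[OF G] by blast
    qed
  qed (use AOb exact_tens_left ttid_tens_right[OF G _ ttid_zero_obj[OF G z]] in blast)+
qed

lemma ttid_tensor_residual_right:
  assumes G: "thick_tensor_ideal C G" and B: "B \<subseteq> Ob C"
  shows "thick_tensor_ideal C {w \<in> Ob C. \<forall>b \<in> Ob C \<odot> B. w \<otimes> b \<in> G}"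
proof -
  have BOb: "Ob C \<odot> B \<subseteq> Ob C"
    using tensor_set_subset_Ob[OF _ B] by blast
  obtain z where z: "zero_obj C z"
    using ex_zero_obj by blast
  show ?thesis
  proof (rule ttid_exact_vimages[where F = "\<lambda>b w. w \<otimes> b" and Fm = "\<lambda>b f. tensm C f (idm C b)",
        OF G _ z])
    show "\<forall>b\<in>Ob C \<odot> B. u \<otimes> w \<otimes> b \<in> G"
      if "w \<in> Ob C" "u \<in> Ob C" "\<forall>b\<in>Ob C \<odot> B. w \<otimes> b \<in> G" for w u
      using that ttid_tens_right[OF G] ttid_isomorphic_closed[OF G _ isomorphic_sym[OF isomorphic_assoc]]
        BOb by blast
    show "\<forall>b\<in>Ob C \<odot> B. w \<otimes> u \<otimes> b \<in> G"
      if w: "w \<in> Ob C" and u: "u \<in> Ob C" and G_w: "\<forall>b\<in>Ob C \<odot> B. w \<otimes> b \<in> G" for w u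
    proof
      fix b
      assume "b \<in> Ob C \<odot> B"
      then obtain u' y where u': "u' \<in> Ob C" and y: "y \<in> B" and b: "b = u' \<otimes> y"
        by (rule tensor_setE)
      have y_Ob: "y \<in> Ob C"
        using y B by blast
      have "w \<otimes> (u \<otimes> u' \<otimes> y) \<in> G"
        using G_w tensor_setI[OF tens_Ob[OF u u'] y] by blast
      moreover have "w \<otimes> (u \<otimes> u' \<otimes> y) \<cong> w \<otimes> (u \<otimes> (u' \<otimes> y))"
        using isomorphic_tensor[OF isomorphic_refl[OF w] isomorphic_assoc[OF u u' y_Ob]] .
      moreover have "w \<otimes> (u \<otimes> (u' \<otimes> y)) \<cong> w \<otimes> u \<otimes> (u' \<otimes> y)"
        using isomorphic_sym[OF isomorphic_assoc[OF w u tens_Ob[OF u' y_Ob]]] .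
      ultimately show "w \<otimes> u \<otimes> b \<in> G"
        unfolding b using ttid_isomorphic_closed[OF G] by blast
    qed
  qed (use BOb exact_tens_right ttid_tens_left[OF G ttid_zero_obj[OF G z]] in blast)+
qed

lemma ttid_tensor_set_gen_right:
  assumes G: "thick_tensor_ideal C G" and A: "A \<subseteq> Ob C" and Y: "Y \<subseteq> Ob C"
    and sub: "A \<odot> Ob C \<odot> Y \<subseteq> G"
  shows "A \<odot> Ob C \<odot> gen C Y \<subseteq> G"
proof -
  have "Y \<subseteq> {v \<in> Ob C. \<forall>a \<in> A \<odot> Ob C. a \<otimes> v \<in> G}"
    using sub Y tensor_setI by blast
  then have "gen C Y \<subseteq> {v \<in> Ob C. \<forall>a \<in> A \<odot> Ob C. a \<otimes> v \<in> G}"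
    by (rule gen_least[OF ttid_tensor_residual_left[OF G A]])
  then show ?thesis
    by (blast elim: tensor_setE[of _ "A \<odot> Ob C" "gen C Y"])
qed

lemma ttid_tensor_set_gen_left:
  assumes G: "thick_tensor_ideal C G" and X: "X \<subseteq> Ob C" and B: "B \<subseteq> Ob C"
    and sub: "X \<odot> (Ob C \<odot> B) \<subseteq> G"
  shows "gen C X \<odot> (Ob C \<odot> B) \<subseteq> G"
proof -
  have "X \<subseteq> {w \<in> Ob C. \<forall>b \<in> Ob C \<odot> B. w \<otimes> b \<in> G}"
    using sub X tensor_setI by blast
  then have "gen C X \<subseteq> {w \<in> Ob C. \<forall>b \<in> Ob C \<odot> B. w \<otimes> b \<in> G}"
    by (rule gen_least[OF ttid_tensor_residual_right[OF G B]])
  then show ?thesis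
    by (blast elim: tensor_setE[of _ "gen C X" "Ob C \<odot> B"])
qed

lemma ttid_tensor_set_assoc:
  assumes G: "thick_tensor_ideal C G" and Ob: "A \<subseteq> Ob C" "B \<subseteq> Ob C" "D \<subseteq> Ob C"
  shows "A \<odot> B \<odot> D \<subseteq> G \<longleftrightarrow> A \<odot> (B \<odot> D) \<subseteq> G"
proof -
  have "x \<otimes> y \<otimes> z \<in> G \<longleftrightarrow> x \<otimes> (y \<otimes> z) \<in> G" if "x \<in> A" "y \<in> B" "z \<in> D" for x y z
    using that Ob ttid_isomorphic_closed[OF G] isomorphic_assoc isomorphic_sym by (meson subsetD)
  then show ?thesis
    unfolding tensor_set_def by blast
qed

lemma ttid_tensor_set_unit:
  assumes G: "thick_tensor_ideal C G" and A: "A \<subseteq> Ob C" and B: "B \<subseteq> Ob C"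
    and sub: "A \<odot> (Ob C \<odot> B) \<subseteq> G"
  shows "A \<odot> B \<subseteq> G"
proof
  fix t
  assume "t \<in> A \<odot> B"
  then obtain x y where x: "x \<in> A" and y: "y \<in> B" and t: "t = x \<otimes> y"
    by (rule tensor_setE)
  have "x \<otimes> (unit C \<otimes> y) \<in> G"
    using sub tensor_setI[OF x tensor_setI[OF unit_Ob y]] by blast
  moreover have "x \<otimes> (unit C \<otimes> y) \<cong> x \<otimes> y"
    using isomorphic_tensor[OF isomorphic_refl isomorphic_lunit] x y A B by blast
  ultimately show "t \<in> G"
    unfolding t by (rule ttid_isomorphic_closed[OF G])
qed

text \<open>Using the residuals, the generators \<open>Y\<close> and then \<open>X\<close> are enlarged to the ideals
  they generate.\<close>

lemma gen_tensor_gen: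
  assumes X: "X \<subseteq> Ob C" and Y: "Y \<subseteq> Ob C"
  shows "gen C (gen C X \<odot> gen C Y) = gen C (X \<odot> Ob C \<odot> Y)"
proof (rule subset_antisym)
  let ?G = "gen C (X \<odot> Ob C \<odot> Y)"
  have G: "thick_tensor_ideal C ?G"
    by (intro gen_ttid tensor_set_subset_Ob X Y subset_refl)
  have gen_Y: "gen C Y \<subseteq> Ob C"
    using gen_subset_Ob[OF Y] .
  have "X \<odot> Ob C \<odot> gen C Y \<subseteq> ?G"
    by (rule ttid_tensor_set_gen_right[OF G X Y gen_superset])
  then have "X \<odot> (Ob C \<odot> gen C Y) \<subseteq> ?G"
    using ttid_tensor_set_assoc[OF G X subset_refl gen_Y] by blast
  then have "gen C X \<odot> (Ob C \<odot> gen C Y) \<subseteq> ?G"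
    by (rule ttid_tensor_set_gen_left[OF G X gen_Y])
  then have "gen C X \<odot> gen C Y \<subseteq> ?G"
    by (rule ttid_tensor_set_unit[OF G gen_subset_Ob[OF X] gen_Y])
  then show "gen C (gen C X \<odot> gen C Y) \<subseteq> ?G"
    by (rule gen_least[OF G])
  have "X \<odot> Ob C \<subseteq> gen C X"
    using ttid_tens_left[OF gen_ttid[OF X]] gen_superset by (blast elim: tensor_setE)
  then show "?G \<subseteq> gen C (gen C X \<odot> gen C Y)"
    by (intro gen_mono tensor_set_mono gen_superset)
qed

lemma gen_tensor_ttid:
  assumes A: "thick_tensor_ideal C A" and B: "thick_tensor_ideal C B"
  shows "gen C (A \<odot> B) = gen C (A \<odot> Ob C \<odot> B)"
  using gen_tensor_gen[OF ttid_subset_Ob[OF A] ttid_subset_Ob[OF B]]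
  by (simp only: gen_ttid_eq[OF A] gen_ttid_eq[OF B])

lemma Ob_tensor_set_subset: "thick_tensor_ideal C A \<Longrightarrow> Ob C \<odot> A \<subseteq> A"
  using ttid_tens_right by (blast elim: tensor_setE)

lemma tensor_set_Ob_subset: "thick_tensor_ideal C A \<Longrightarrow> A \<odot> Ob C \<subseteq> A"
  using ttid_tens_left by (blast elim: tensor_setE)

lemma gen_Ob_tensor:
  assumes A: "thick_tensor_ideal C A"
  shows "gen C (Ob C \<odot> A) = A"
proof (rule subset_antisym)
  show "gen C (Ob C \<odot> A) \<subseteq> A"
    by (rule gen_least[OF A Ob_tensor_set_subset[OF A]])
  have "gen C A \<subseteq> gen C (Ob C \<odot> A)"
  proof (rule gen_mono_isomorphic)
    fix y
    assume y: "y \<in> A"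
    then have "unit C \<otimes> y \<in> Ob C \<odot> A" "unit C \<otimes> y \<cong> y"
      using tensor_setI[OF unit_Ob] isomorphic_lunit ttid_subset_Ob[OF A] by blast+
    then show "\<exists>t\<in>Ob C \<odot> A. t \<cong> y"
      by blast
  qed
  then show "A \<subseteq> gen C (Ob C \<odot> A)"
    by (simp only: gen_ttid_eq[OF A])
qed

lemma gen_tensor_Ob:
  assumes A: "thick_tensor_ideal C A"
  shows "gen C (A \<odot> Ob C) = A"
proof (rule subset_antisym)
  show "gen C (A \<odot> Ob C) \<subseteq> A"
    by (rule gen_least[OF A tensor_set_Ob_subset[OF A]])
  have "gen C A \<subseteq> gen C (A \<odot> Ob C)"
  proof (rule gen_mono_isomorphic)
    fix y
    assume y: "y \<in> A"
    then have "y \<otimes> unit C \<in> A \<odot> Ob C" "y \<otimes> unit C \<cong> y"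
      using tensor_setI[OF _ unit_Ob] isomorphic_runit ttid_subset_Ob[OF A] by blast+
    then show "\<exists>t\<in>A \<odot> Ob C. t \<cong> y"
      by blast
  qed
  then show "A \<subseteq> gen C (A \<odot> Ob C)"
    by (simp only: gen_ttid_eq[OF A])
qed

lemma gen_unit: "gen C {unit C} = Ob C"
proof (rule subset_antisym)
  show "gen C {unit C} \<subseteq> Ob C"
    using gen_subset_Ob unit_Ob by blast
  have "x \<in> gen C {unit C}" if x: "x \<in> Ob C" for x
  proof -
    have "x \<otimes> unit C \<in> gen C {unit C}"
      using ttid_tens_right[OF gen_ttid x] unit_Ob gen_superset by blast
    then show ?thesis
      using gen_isomorphic_closed isomorphic_runit[OF x] by blast
  qed
  then show "Ob C \<subseteq> gen C {unit C}"
    by blast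
qed

lemma gen_tensor_set_assoc:
  "A \<subseteq> Ob C \<Longrightarrow> B \<subseteq> Ob C \<Longrightarrow> D \<subseteq> Ob C \<Longrightarrow> gen C (A \<odot> B \<odot> D) = gen C (A \<odot> (B \<odot> D))"
  using ttid_tensor_set_assoc by (intro gen_eqI) blast

lemma gen_gen_tensor_left:
  assumes A: "thick_tensor_ideal C A" and B: "thick_tensor_ideal C B" and D: "thick_tensor_ideal C D"
  shows "gen C (gen C (A \<odot> B) \<odot> D) = gen C (A \<odot> B \<odot> D)"
proof (rule subset_antisym)
  let ?G = "gen C (A \<odot> B \<odot> D)"
  have Ob: "A \<odot> B \<subseteq> Ob C" "D \<subseteq> Ob C"
    using A B D ttid_subset_Ob tensor_set_subset_Ob by blast+
  have G: "thick_tensor_ideal C ?G"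
    by (intro gen_ttid tensor_set_subset_Ob Ob)
  have "A \<odot> B \<odot> (Ob C \<odot> D) \<subseteq> ?G"
    using tensor_set_mono[OF subset_refl Ob_tensor_set_subset[OF D]] gen_superset by blast
  then have "A \<odot> B \<odot> Ob C \<odot> D \<subseteq> ?G"
    using ttid_tensor_set_assoc[OF G Ob(1) subset_refl Ob(2)] by blast
  then show "gen C (gen C (A \<odot> B) \<odot> D) \<subseteq> ?G"
    using gen_least[OF G] gen_tensor_gen[OF Ob] by (simp only: gen_ttid_eq[OF D])
  show "?G \<subseteq> gen C (gen C (A \<odot> B) \<odot> D)"
    by (intro gen_mono tensor_set_mono gen_superset subset_refl)
qed

lemma gen_gen_tensor_right:
  assumes A: "thick_tensor_ideal C A" and B: "thick_tensor_ideal C B" and D: "thick_tensor_ideal C D"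
  shows "gen C (A \<odot> gen C (B \<odot> D)) = gen C (A \<odot> (B \<odot> D))"
proof (rule subset_antisym)
  have Ob: "A \<subseteq> Ob C" "B \<odot> D \<subseteq> Ob C"
    using A B D ttid_subset_Ob tensor_set_subset_Ob by blast+
  have "A \<odot> Ob C \<odot> (B \<odot> D) \<subseteq> gen C (A \<odot> (B \<odot> D))"
    using tensor_set_mono[OF tensor_set_Ob_subset[OF A] subset_refl] gen_superset by blast
  then show "gen C (A \<odot> gen C (B \<odot> D)) \<subseteq> gen C (A \<odot> (B \<odot> D))"
    using gen_least[OF gen_ttid] tensor_set_subset_Ob[OF Ob] gen_tensor_gen[OF Ob]
    by (simp only: gen_ttid_eq[OF A])
  show "gen C (A \<odot> (B \<odot> D)) \<subseteq> gen C (A \<odot> gen C (B \<odot> D))"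
    by (intro gen_mono tensor_set_mono gen_superset subset_refl)
qed

lemma gen_tensor_assoc:
  assumes "thick_tensor_ideal C A" and "thick_tensor_ideal C B" and "thick_tensor_ideal C D"
  shows "gen C (gen C (A \<odot> B) \<odot> D) = gen C (A \<odot> gen C (B \<odot> D))"
  using assms gen_gen_tensor_left gen_gen_tensor_right gen_tensor_set_assoc ttid_subset_Ob by metis

lemma gen_tensor_sup_right:
  assumes A: "thick_tensor_ideal C A" and B: "thick_tensor_ideal C B" and D: "thick_tensor_ideal C D"
  shows "gen C (A \<odot> gen C (B \<union> D)) = gen C (gen C (A \<odot> B) \<union> gen C (A \<odot> D))"
proof -
  have Ob: "A \<subseteq> Ob C" "B \<union> D \<subseteq> Ob C"
    using A B D ttid_subset_Ob by blast+
  have "gen C (A \<odot> gen C (B \<union> D)) = gen C (A \<odot> Ob C \<odot> (B \<union> D))"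
    using gen_tensor_gen[OF Ob] by (simp only: gen_ttid_eq[OF A])
  also have "\<dots> = gen C (gen C (A \<odot> Ob C \<odot> B) \<union> gen C (A \<odot> Ob C \<odot> D))"
    by (simp only: tensor_set_Un_right gen_Un_gen)
  finally show ?thesis
    by (simp only: gen_tensor_ttid[OF A B] gen_tensor_ttid[OF A D])
qed

lemma gen_tensor_sup_left:
  assumes A: "thick_tensor_ideal C A" and B: "thick_tensor_ideal C B" and D: "thick_tensor_ideal C D"
  shows "gen C (gen C (B \<union> D) \<odot> A) = gen C (gen C (B \<odot> A) \<union> gen C (D \<odot> A))"
proof -
  have Ob: "B \<union> D \<subseteq> Ob C" "A \<subseteq> Ob C"
    using A B D ttid_subset_Ob by blast+
  have "gen C (gen C (B \<union> D) \<odot> A) = gen C ((B \<union> D) \<odot> Ob C \<odot> A)"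
    using gen_tensor_gen[OF Ob] by (simp only: gen_ttid_eq[OF A])
  also have "\<dots> = gen C (gen C (B \<odot> Ob C \<odot> A) \<union> gen C (D \<odot> Ob C \<odot> A))"
    by (simp only: tensor_set_Un_left gen_Un_gen)
  finally show ?thesis
    by (simp only: gen_tensor_ttid[OF B A] gen_tensor_ttid[OF D A])
qed

lemma isomorphic_commute: "tensor_commutative C \<Longrightarrow> x \<in> Ob C \<Longrightarrow> y \<in> Ob C \<Longrightarrow> x \<otimes> y \<cong> y \<otimes> x"
  unfolding tensor_commutative_def isomorphic_def by blast

lemma tensor_middle_commutative:
  assumes comm: "tensor_commutative C" and x: "x \<in> Ob C" and y: "y \<in> Ob C" and u: "u \<in> Ob C"
  shows "x \<otimes> u \<otimes> y \<in> gen C {x \<otimes> unit C \<otimes> y}"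
proof -
  let ?E = "gen C {x \<otimes> unit C \<otimes> y}"
  have E: "thick_tensor_ideal C ?E"
    using gen_ttid tens_Ob x y unit_Ob by simp
  have "x \<otimes> unit C \<otimes> y \<in> ?E"
    using gen_superset by blast
  then have "x \<otimes> y \<in> ?E"
    using gen_isomorphic_closed isomorphic_tensor[OF isomorphic_runit[OF x] isomorphic_refl[OF y]] by blast
  then have "x \<otimes> y \<otimes> u \<in> ?E"
    using ttid_tens_left[OF E _ u] by blast
  then have "x \<otimes> (y \<otimes> u) \<in> ?E"
    using gen_isomorphic_closed isomorphic_assoc[OF x y u] by blast
  then have "x \<otimes> (u \<otimes> y) \<in> ?E"
    using gen_isomorphic_closed isomorphic_tensor[OF isomorphic_refl[OF x] isomorphic_commute[OF comm y u]]
    by blast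
  then show ?thesis
    using gen_isomorphic_closed isomorphic_sym[OF isomorphic_assoc[OF x u y]] by blast
qed

lemma tensor_middle_thick_generator:
  assumes c: "c \<in> Ob C" and generates: "\<forall>D. thick C D \<and> c \<in> D \<longrightarrow> D = Ob C"
    and x: "x \<in> Ob C" and y: "y \<in> Ob C" and u: "u \<in> Ob C"
  shows "x \<otimes> u \<otimes> y \<in> gen C {x \<otimes> c \<otimes> y}"
proof -
  let ?E = "gen C {x \<otimes> c \<otimes> y}"
  have E: "thick_tensor_ideal C ?E"
    using gen_ttid tens_Ob x y c by simp
  obtain z where z: "zero_obj C z"
    using ex_zero_obj by blast
  have "z \<otimes> y \<in> ?E"
    using ttid_tens_left[OF E ttid_zero_obj[OF E z] y] .
  then have right: "thick C {w \<in> Ob C. w \<otimes> y \<in> ?E}"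
    by (rule thick_exact_vimage[OF ttid_thick[OF E] exact_tens_right[OF y] zero_obj_Ob[OF z]])
  have "x \<otimes> c \<in> {w \<in> Ob C. w \<otimes> y \<in> ?E}"
    using tens_Ob[OF x c] gen_superset by blast
  then have "thick C {v \<in> Ob C. x \<otimes> v \<in> {w \<in> Ob C. w \<otimes> y \<in> ?E}}"
    by (rule thick_exact_vimage[OF right exact_tens_left[OF x] c])
  moreover have "c \<in> {v \<in> Ob C. x \<otimes> v \<in> {w \<in> Ob C. w \<otimes> y \<in> ?E}}"
    using c \<open>x \<otimes> c \<in> {w \<in> Ob C. w \<otimes> y \<in> ?E}\<close> by blast
  ultimately have "{v \<in> Ob C. x \<otimes> v \<in> {w \<in> Ob C. w \<otimes> y \<in> ?E}} = Ob C"
    using generates by (elim allE impE) (rule conjI)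
  then show ?thesis
    using u by blast
qed

lemma gen_tensor_principal:
  assumes hyp: "tensor_commutative C \<or> (\<exists>c\<in>Ob C. \<forall>D. thick C D \<and> c \<in> D \<longrightarrow> D = Ob C)"
    and x: "x \<in> Ob C" and y: "y \<in> Ob C"
  shows "\<exists>w\<in>Ob C. gen C (gen C {x} \<odot> gen C {y}) = gen C {w}"
proof -
  obtain c where c: "c \<in> Ob C" and middle: "\<And>u. u \<in> Ob C \<Longrightarrow> x \<otimes> u \<otimes> y \<in> gen C {x \<otimes> c \<otimes> y}"
  proof (cases "tensor_commutative C")
    case True
    then show thesis
      using that[OF unit_Ob] tensor_middle_commutative[OF _ x y] by blast
  next
    case False
    then obtain c where "c \<in> Ob C" "\<forall>D. thick C D \<and> c \<in> D \<longrightarrow> D = Ob C"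
      using hyp by blast
    then show thesis
      using that tensor_middle_thick_generator[OF _ _ x y] by blast
  qed
  have "gen C (gen C {x} \<odot> gen C {y}) = gen C ({x} \<odot> Ob C \<odot> {y})"
    using gen_tensor_gen x y by simp
  also have "\<dots> = gen C {x \<otimes> c \<otimes> y}"
  proof (rule subset_antisym)
    have "{x} \<odot> Ob C \<odot> {y} \<subseteq> gen C {x \<otimes> c \<otimes> y}"
      using middle by (blast elim: tensor_setE)
    moreover have "thick_tensor_ideal C (gen C {x \<otimes> c \<otimes> y})"
      using gen_ttid tens_Ob x y c by simp
    ultimately show "gen C ({x} \<odot> Ob C \<odot> {y}) \<subseteq> gen C {x \<otimes> c \<otimes> y}"
      using gen_least by blast
    show "gen C {x \<otimes> c \<otimes> y} \<subseteq> gen C ({x} \<odot> Ob C \<odot> {y})"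
      using tensor_setI[OF tensor_setI[OF singletonI c] singletonI] by (intro gen_mono) simp
  qed
  finally show ?thesis
    using tens_Ob x y c by blast
qed

subsection \<open>The ideal lattice\<close>

abbreviation thick_tensor_ideals :: "'o set set"
  where "thick_tensor_ideals \<equiv> {D. thick_tensor_ideal C D}"

lemma is_sup_gen_Union:
  assumes A: "A \<subseteq> thick_tensor_ideals"
  shows "is_sup thick_tensor_ideals (\<subseteq>) A (gen C (\<Union>A))"
  unfolding is_sup_def
proof (intro conjI ballI impI)
  have "\<Union>A \<subseteq> Ob C"
    using A ttid_subset_Ob by blast
  then show "gen C (\<Union>A) \<in> thick_tensor_ideals"
    using gen_ttid by simp
  show "a \<subseteq> gen C (\<Union>A)" if "a \<in> A" for a
    using that gen_superset[of "\<Union>A"] by blast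
  show "gen C (\<Union>A) \<subseteq> u" if "u \<in> thick_tensor_ideals" "\<forall>a\<in>A. a \<subseteq> u" for u
    using that gen_least[of u "\<Union>A"] by blast
qed

lemma is_sup_iff:
  "A \<subseteq> thick_tensor_ideals \<Longrightarrow> is_sup thick_tensor_ideals (\<subseteq>) A s \<longleftrightarrow> s = gen C (\<Union>A)"
  using is_sup_gen_Union unfolding is_sup_def by (meson subset_antisym)

lemma is_sup_principal:
  assumes D: "thick_tensor_ideal C D"
  shows "is_sup thick_tensor_ideals (\<subseteq>) ((\<lambda>x. gen C {x}) ` D) D"
proof -
  have principals: "(\<lambda>x. gen C {x}) ` D \<subseteq> thick_tensor_ideals"
    using gen_ttid ttid_subset_Ob[OF D] by blast
  have "gen C (\<Union>x\<in>D. gen C {x}) = D"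
  proof (rule subset_antisym)
    have "gen C {x} \<subseteq> D" if "x \<in> D" for x
      using that by (intro gen_least[OF D]) simp
    then show "gen C (\<Union>x\<in>D. gen C {x}) \<subseteq> D"
      by (intro gen_least[OF D]) blast
    show "D \<subseteq> gen C (\<Union>x\<in>D. gen C {x})"
    proof
      fix x
      assume "x \<in> D"
      then have "x \<in> (\<Union>x\<in>D. gen C {x})"
        using gen_superset[of "{x}"] by blast
      then show "x \<in> gen C (\<Union>x\<in>D. gen C {x})"
        by (rule subsetD[OF gen_superset])
    qed
  qed
  then show ?thesis
    by (simp add: is_sup_iff[OF principals])
qed

lemma compact_el_principal:
  assumes x: "x \<in> Ob C"
  shows "compact_el thick_tensor_ideals (\<subseteq>) (gen C {x})"
  unfolding compact_el_def
proof (intro conjI allI impI)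
  show "gen C {x} \<in> thick_tensor_ideals"
    using gen_ttid x by simp
  fix A s
  assume A: "A \<subseteq> thick_tensor_ideals" and "is_sup thick_tensor_ideals (\<subseteq>) A s" and "gen C {x} \<subseteq> s"
  then have "x \<in> gen C (\<Union>A)"
    using is_sup_iff[OF A] gen_superset[of "{x}"] by auto
  moreover have UA: "\<Union>A \<subseteq> Ob C"
    using A ttid_subset_Ob by blast
  ultimately have "x \<in> (\<Union>Y\<in>{Y. finite Y \<and> Y \<subseteq> \<Union>A}. gen C Y)"
    by (simp only: gen_eq_finite_union)
  then obtain Y where "finite Y" "Y \<subseteq> \<Union>A" "x \<in> gen C Y"
    by blast
  moreover obtain A' where A': "finite A'" "A' \<subseteq> A" "Y \<subseteq> \<Union>A'"
    using finite_subset_Union[OF \<open>finite Y\<close> \<open>Y \<subseteq> \<Union>A\<close>] by blast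
  ultimately have "x \<in> gen C (\<Union>A')"
    using gen_mono by blast
  moreover have "thick_tensor_ideal C (gen C (\<Union>A'))"
    using UA A'(2) by (intro gen_ttid) blast
  ultimately have "gen C {x} \<subseteq> gen C (\<Union>A')"
    by (intro gen_least) simp_all
  moreover have "is_sup thick_tensor_ideals (\<subseteq>) A' (gen C (\<Union>A'))"
    using A A'(2) by (intro is_sup_gen_Union) blast
  ultimately show "\<exists>A' s'. A' \<subseteq> A \<and> finite A' \<and> is_sup thick_tensor_ideals (\<subseteq>) A' s' \<and> gen C {x} \<subseteq> s'"
    using A' by blast
qed

lemma compact_el_imp_principal:
  assumes compact: "compact_el thick_tensor_ideals (\<subseteq>) D"
  shows "\<exists>x\<in>Ob C. D = gen C {x}"
proof -
  have D: "thick_tensor_ideal C D"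
    using compact unfolding compact_el_def by blast
  have principals: "(\<lambda>x. gen C {x}) ` D \<subseteq> thick_tensor_ideals"
    using gen_ttid ttid_subset_Ob[OF D] by blast
  have "\<forall>A s. A \<subseteq> thick_tensor_ideals \<longrightarrow> is_sup thick_tensor_ideals (\<subseteq>) A s \<longrightarrow> D \<subseteq> s \<longrightarrow>
      (\<exists>A' s'. A' \<subseteq> A \<and> finite A' \<and> is_sup thick_tensor_ideals (\<subseteq>) A' s' \<and> D \<subseteq> s')"
    using compact unfolding compact_el_def by (elim conjE)
  from this[rule_format, OF principals is_sup_principal[OF D] subset_refl]
  obtain A' s' where A': "A' \<subseteq> (\<lambda>x. gen C {x}) ` D" "finite A'"
    and s': "is_sup thick_tensor_ideals (\<subseteq>) A' s'" and "D \<subseteq> s'"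
    by blast
  obtain X where X: "X \<subseteq> D" "finite X" and A'_eq: "A' = (\<lambda>x. gen C {x}) ` X"
    using finite_subset_image[OF A'(2,1)] by blast
  have X_Ob: "X \<subseteq> Ob C"
    using X ttid_subset_Ob[OF D] by blast
  have "D \<subseteq> gen C (\<Union>A')"
    using \<open>D \<subseteq> s'\<close> is_sup_iff[OF order_trans[OF A'(1) principals]] s' by blast
  also have "\<dots> \<subseteq> gen C X"
  proof (rule gen_least[OF gen_ttid[OF X_Ob]])
    show "\<Union>A' \<subseteq> gen C X"
      unfolding A'_eq using gen_mono[of "{x}" X for x] by blast
  qed
  finally have "D = gen C X"
    using gen_least[OF D X(1)] by (rule subset_antisym)
  then show ?thesis
    using gen_finite_principal[OF X(2) X_Ob] by metis
qed

lemma is_sup_compact_els: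
  assumes D: "thick_tensor_ideal C D"
  shows "\<exists>A. A \<subseteq> {D. compact_el thick_tensor_ideals (\<subseteq>) D} \<and> is_sup thick_tensor_ideals (\<subseteq>) A D"
proof (intro exI conjI)
  show "(\<lambda>x. gen C {x}) ` D \<subseteq> {D. compact_el thick_tensor_ideals (\<subseteq>) D}"
    using compact_el_principal ttid_subset_Ob[OF D] by auto
  show "is_sup thick_tensor_ideals (\<subseteq>) ((\<lambda>x. gen C {x}) ` D) D"
    by (rule is_sup_principal[OF D])
qed

lemma compact_el_iff_principal:
  "compact_el thick_tensor_ideals (\<subseteq>) D \<longleftrightarrow> (\<exists>x\<in>Ob C. D = gen C {x})"
  using compact_el_principal compact_el_imp_principal by blast

lemma gen_prod_cls_ttid:
  "A \<in> thick_tensor_ideals \<Longrightarrow> B \<in> thick_tensor_ideals \<Longrightarrow> gen C (prod_cls C A B) = gen C (A \<odot> B)"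
  using gen_prod_cls ttid_subset_Ob by simp

lemma gen_tensor_set_mem:
  "A \<in> thick_tensor_ideals \<Longrightarrow> B \<in> thick_tensor_ideals \<Longrightarrow> gen C (A \<odot> B) \<in> thick_tensor_ideals"
  using gen_ttid tensor_set_subset_Ob ttid_subset_Ob by simp

lemma is_sup_Ob: "is_sup thick_tensor_ideals (\<subseteq>) thick_tensor_ideals (Ob C)"
proof -
  have "\<Union>thick_tensor_ideals = Ob C"
    using ttid_Ob ttid_subset_Ob by blast
  then show ?thesis
    using is_sup_iff gen_ttid_eq[OF ttid_Ob] by simp
qed

lemma is_sup_gen_tensor_left:
  assumes A: "A \<in> thick_tensor_ideals" and B: "B \<in> thick_tensor_ideals" and D: "D \<in> thick_tensor_ideals"
    and sup: "is_sup thick_tensor_ideals (\<subseteq>) {B, D} S"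
  shows "is_sup thick_tensor_ideals (\<subseteq>) {gen C (A \<odot> B), gen C (A \<odot> D)} (gen C (A \<odot> S))"
proof -
  have "S = gen C (B \<union> D)"
    using sup is_sup_iff B D by simp
  then have "gen C (A \<odot> S) = gen C (\<Union>{gen C (A \<odot> B), gen C (A \<odot> D)})"
    using gen_tensor_sup_right A B D by simp
  then show ?thesis
    using is_sup_iff gen_tensor_set_mem A B D by simp
qed

lemma is_sup_gen_tensor_right:
  assumes A: "A \<in> thick_tensor_ideals" and B: "B \<in> thick_tensor_ideals" and D: "D \<in> thick_tensor_ideals"
    and sup: "is_sup thick_tensor_ideals (\<subseteq>) {B, D} S"
  shows "is_sup thick_tensor_ideals (\<subseteq>) {gen C (B \<odot> A), gen C (D \<odot> A)} (gen C (S \<odot> A))"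
proof -
  have "S = gen C (B \<union> D)"
    using sup is_sup_iff B D by simp
  then have "gen C (S \<odot> A) = gen C (\<Union>{gen C (B \<odot> A), gen C (D \<odot> A)})"
    using gen_tensor_sup_left A B D by simp
  then show ?thesis
    using is_sup_iff gen_tensor_set_mem A B D by simp
qed

lemma compact_el_gen_tensor:
  assumes hyp: "tensor_commutative C \<or> (\<exists>c\<in>Ob C. \<forall>D. thick C D \<and> c \<in> D \<longrightarrow> D = Ob C)"
    and "compact_el thick_tensor_ideals (\<subseteq>) A" and "compact_el thick_tensor_ideals (\<subseteq>) B"
  shows "compact_el thick_tensor_ideals (\<subseteq>) (gen C (A \<odot> B))"
  using assms gen_tensor_principal[OF hyp] unfolding compact_el_iff_principal by metis

lemma ideal_lattice_thick_tensor_ideals: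
  assumes hyp: "tensor_commutative C \<or> (\<exists>c\<in>Ob C. \<forall>D. thick C D \<and> c \<in> D \<longrightarrow> D = Ob C)"
  shows "ideal_lattice thick_tensor_ideals (\<subseteq>) (\<lambda>D1 D2. gen C (prod_cls C D1 D2))"
  unfolding ideal_lattice_def
proof (intro conjI ballI allI impI)
  show "gen C (prod_cls C A B) \<in> thick_tensor_ideals"
    if "A \<in> thick_tensor_ideals" "B \<in> thick_tensor_ideals" for A B
    using that gen_prod_cls_ttid gen_tensor_set_mem by simp
  show "gen C (prod_cls C (gen C (prod_cls C A B)) D) = gen C (prod_cls C A (gen C (prod_cls C B D)))"
    if "A \<in> thick_tensor_ideals" "B \<in> thick_tensor_ideals" "D \<in> thick_tensor_ideals" for A B D
    using that gen_prod_cls_ttid gen_tensor_set_mem gen_tensor_assoc by simp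
  show "\<exists>S. is_sup thick_tensor_ideals (\<subseteq>) A S" if "A \<subseteq> thick_tensor_ideals" for A
    using is_sup_gen_Union[OF that] by blast
  show "\<exists>A. A \<subseteq> {D. compact_el thick_tensor_ideals (\<subseteq>) D} \<and> is_sup thick_tensor_ideals (\<subseteq>) A D"
    if "D \<in> thick_tensor_ideals" for D
    using that is_sup_compact_els by simp
  show "is_sup thick_tensor_ideals (\<subseteq>) {gen C (prod_cls C A B), gen C (prod_cls C A D)} (gen C (prod_cls C A S))"
    and "is_sup thick_tensor_ideals (\<subseteq>) {gen C (prod_cls C B A), gen C (prod_cls C D A)} (gen C (prod_cls C S A))"
    if "A \<in> thick_tensor_ideals" "B \<in> thick_tensor_ideals" "D \<in> thick_tensor_ideals"
      and "is_sup thick_tensor_ideals (\<subseteq>) {B, D} S" for A B D S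
    using that is_sup_gen_tensor_left is_sup_gen_tensor_right gen_prod_cls_ttid
      is_sup_def[of thick_tensor_ideals "(\<subseteq>)" "{B, D}" S] by auto
  show "\<exists>T. is_sup thick_tensor_ideals (\<subseteq>) thick_tensor_ideals T \<and> compact_el thick_tensor_ideals (\<subseteq>) T \<and>
      (\<forall>A\<in>thick_tensor_ideals. gen C (prod_cls C T A) = A \<and> gen C (prod_cls C A T) = A)"
    using is_sup_Ob compact_el_principal[OF unit_Ob] gen_unit ttid_Ob gen_prod_cls_ttid
      gen_Ob_tensor gen_tensor_Ob by auto
  show "compact_el thick_tensor_ideals (\<subseteq>) (gen C (prod_cls C A B))"
    if "compact_el thick_tensor_ideals (\<subseteq>) A" "compact_el thick_tensor_ideals (\<subseteq>) B" for A B
    using that compact_el_gen_tensor[OF hyp] gen_prod_cls_ttid unfolding compact_el_def by auto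
qed auto

end

theorem mainTheorem14:
  fixes C :: "('o, 'm) ttcat"
  assumes "tensor_triangulated C"
    and "tensor_commutative C \<or>
         (\<exists>c\<in>Ob C. \<forall>D. thick C D \<and> c \<in> D \<longrightarrow> D = Ob C)"
  shows "ideal_lattice {D. thick_tensor_ideal C D} (\<subseteq>) (\<lambda>D1 D2. gen C (prod_cls C D1 D2)) \<and>
         (\<forall>D. thick_tensor_ideal C D \<longrightarrow>
           (compact_el {D. thick_tensor_ideal C D} (\<subseteq>) D \<longleftrightarrow> (\<exists>x\<in>Ob C. D = gen C {x})))"
proof -
  interpret tensor_triangulated_category C
    by (rule tensor_triangulated_category.intro) (rule assms(1))
  show ?thesis
    using ideal_lattice_thick_tensor_ideals[OF assms(2)] compact_el_iff_principal by blast
qed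

end
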